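(* Let $\tilde\Psi_\mu$, $G_{\mathbf x}$, $D_{\mathbf x}$, $\mathrm{SINR}^n_\mu$, $h$, $R$, $d$, $a$, $\lambda$, $\eta$, $m$, $P$, $\sigma_n^2$ be as in the context, and let $\beta\ge 1$. Then the success probability at the hovering location satisfies $$P^s_\mu=\mathbb P\Big(\bigcup_{\mathbf x_n\in\tilde\Psi_\mu}\{\mathrm{SINR}^n_\mu\ge\beta\}\Big)=\mathbb E\Big\{\sum_{\mathbf x_n\in\tilde\Psi_\mu}\mathbb 1_{\{\mathrm{SINR}^n_\mu\ge\beta\}}\Big\} =2a\pi\lambda\int_h^d\sum_{k=0}^{m-1}\frac{(-m\beta r^\eta)^k}{k!}\Big[\frac{\partial^k}{\partial s^k}\mathcal L_I(s)\Big]_{s=m\beta r^\eta}\, r\,dr,$$ where $\mathcal L_I(s)=\mathbb E[e^{-sI}]$ is the Laplace transform of the normalized interference-plus-noise $I=\sum_{\mathbf x\in\tilde\Psi_\mu\setminus\{\mathbf x_n\}}G_{\mathbf x}D_{\mathbf x}^{-\eta}+\sigma_n^2/P$ seen by a typical transmitting node, given by $$\mathcal L_I(s)=e^{-s\sigma_n^2/P}\exp\Big(-2\pi\lambda a\int_h^d\Big(1-\big(1+\tfrac{s r^{-\eta}}{m}\big)^{-m}\Big)r\,dr\Big).$$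
   Context: IoT nodes on the ground plane form a homogeneous Poisson point process $\Psi$ of intensity $\lambda>0$. A UAV hovers at altitude $h>0$ directly above the center $c_\mu$ of a disk $\mathcal A_\mu$ of radius $R>0$ on the ground; set $d=\sqrt{h^2+R^2}$. For a ground node at $\mathbf x$, $D_{\mathbf x}=\sqrt{\|\mathbf x-c_\mu\|^2+h^2}$ is its distance to the UAV (so for a uniform point in $\mathcal A_\mu$, $D$ has density $2r/R^2$ on $[h,d]$). Each node in $\mathcal A_\mu$ transmits independently with (ALOHA) probability $a\in(0,1]$, so the set of simultaneous transmitters $\tilde\Psi_\mu$ is a Poisson point process of intensity $a\lambda\mathbb 1_{\{\mathbf x\in\mathcal A_\mu\}}$. All nodes transmit with power $P>0$; the noise variance is $\sigma_n^2>0$; path loss is $D^{-\eta}$ with $\eta>2$. Each link has an i.i.d. power gain $G_{\mathbf x}$ (independent of the point process) with Gamma density $f_G(g)=\frac{m^m g^{m-1}}{\Gamma(m)}e^{-mg}$, $g>0$, where $m$ is a positive integer (Nakagami-$m$ fading). For $\mathbf x_n\in\tilde\Psi_\mu$, $\mathrm{SINR}^n_\mu=\dfrac{P G_{\mathbf x_n}D_{\mathbf x_n}^{-\eta}}{\sum_{\mathbf x\in\tilde\Psi_\mu\setminus\{\mathbf x_n\}}P G_{\mathbf x}D_{\mathbf x}^{-\eta}+\sigma_n^2}$. $\frac{\partial^k}{\partial s^k}$ denotes the $k$-th derivative in $s$. *)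

theory Defs
  imports "HOL-Probability.Probability"
begin

text \<open>A transmitter configuration with n points is a function
  nat \<Rightarrow> (real \<times> real) \<times> real on indices {..<n}: ground position and
  fading power gain of each transmitting node.\<close>

definition nakagami_density :: "nat \<Rightarrow> real \<Rightarrow> real" where
  "nakagami_density m g =
     (if g > 0 then real m ^ m * g ^ (m - 1) / Gamma (real m) * exp (- real m * g) else 0)"

definition gain_dist :: "nat \<Rightarrow> real measure" where
  "gain_dist m = density lborel (\<lambda>g. ennreal (nakagami_density m g))"

definition mark_dist :: "real \<times> real \<Rightarrow> real \<Rightarrow> nat \<Rightarrow> ((real \<times> real) \<times> real) measure" where
  "mark_dist c R m = uniform_measure lborel (cball c R) \<Otimes>\<^sub>M gain_dist m"

definition config_dist :: "real \<times> real \<Rightarrow> real \<Rightarrow> nat \<Rightarrow> nat \<Rightarrow> (nat \<Rightarrow> (real \<times> real) \<times> real) measure" where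
  "config_dist c R m n = PiM {..<n} (\<lambda>_. mark_dist c R m)"

text \<open>Expectation of a functional F of the marked Poisson point process of intensity
  a*lam on the disk cball c R (i.i.d. Nakagami-m gains): the number of points is
  Poisson with mean a*lam*pi*R^2 and, given n points, they are i.i.d. uniform on the disk.\<close>
definition ppp_expect ::
  "real \<Rightarrow> real \<Rightarrow> real \<times> real \<Rightarrow> real \<Rightarrow> nat \<Rightarrow>
   (nat \<Rightarrow> (nat \<Rightarrow> (real \<times> real) \<times> real) \<Rightarrow> real) \<Rightarrow> real" where
  "ppp_expect a lam c R m F =
     (let \<Lambda> = a * lam * pi * R\<^sup>2 in
      \<Sum>n. exp (- \<Lambda>) * \<Lambda> ^ n / fact n * integral\<^sup>L (config_dist c R m n) (F n))"

definition ppp_prob ::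
  "real \<Rightarrow> real \<Rightarrow> real \<times> real \<Rightarrow> real \<Rightarrow> nat \<Rightarrow>
   (nat \<Rightarrow> (nat \<Rightarrow> (real \<times> real) \<times> real) \<Rightarrow> bool) \<Rightarrow> real" where
  "ppp_prob a lam c R m E =
     (let \<Lambda> = a * lam * pi * R\<^sup>2 in
      \<Sum>n. exp (- \<Lambda>) * \<Lambda> ^ n / fact n *
           measure (config_dist c R m n) {\<omega> \<in> space (config_dist c R m n). E n \<omega>})"

definition uav_dist :: "real \<times> real \<Rightarrow> real \<Rightarrow> real \<times> real \<Rightarrow> real" where
  "uav_dist c h x = sqrt ((dist x c)\<^sup>2 + h\<^sup>2)"

definition sinr ::
  "real \<times> real \<Rightarrow> real \<Rightarrow> real \<Rightarrow> real \<Rightarrow> real \<Rightarrow> nat \<Rightarrow>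
   (nat \<Rightarrow> (real \<times> real) \<times> real) \<Rightarrow> nat \<Rightarrow> real" where
  "sinr c h \<eta> P \<sigma>2 n \<omega> i =
     P * snd (\<omega> i) * uav_dist c h (fst (\<omega> i)) powr (- \<eta>) /
     ((\<Sum>j\<in>{..<n} - {i}. P * snd (\<omega> j) * uav_dist c h (fst (\<omega> j)) powr (- \<eta>)) + \<sigma>2)"

definition laplace_I ::
  "real \<Rightarrow> real \<Rightarrow> real \<Rightarrow> real \<Rightarrow> real \<Rightarrow> nat \<Rightarrow> real \<Rightarrow> real \<Rightarrow> real \<Rightarrow> real" where
  "laplace_I a lam h d \<eta> m P \<sigma>2 s =
     exp (- s * \<sigma>2 / P) *
     exp (- 2 * pi * lam * a *
          integral {h..d} (\<lambda>r. (1 - inverse ((1 + s * r powr (- \<eta>) / real m) ^ m)) * r))"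

end

theory Submission
  imports Defs
begin

text \<open>Conditionally on the number \<open>n\<close> of transmitters the marks (position, gain) are i.i.d., so the
  Laplace transform of the interference factorises into \<open>exp(-s\<sigma>\<^sup>2/P) q(s)\<^sup>n\<close>, where \<open>q\<close> is the
  Laplace transform of one received power; averaging over the Poisson law of \<open>n\<close> gives \<open>laplace_I\<close>.
  Since \<open>\<beta> \<ge> 1\<close>, at most one node can be decoded, so the success event has the probability of
  the expected number of successful nodes. By exchangeability that expectation is \<open>n\<close> times the
  success probability of a node with \<open>n - 1\<close> interferers, which, the Nakagami gain being Erlang,
  is an integral over the distance \<open>r\<close> of the Erlang tail \<open>\<Sum>\<^sub>k\<^sub><\<^sub>m (sI)\<^sup>k/k! e\<^sup>-\<^sup>s\<^sup>I\<close> at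
  \<open>s = m\<beta>r\<^sup>\<eta>\<close>. The expectations of \<open>I\<^sup>k e\<^sup>-\<^sup>s\<^sup>I\<close> are, up to the sign \<open>(-1)\<^sup>k\<close>, the derivatives of the
  Laplace transform, and the size-biased Poisson average \<open>n p\<^sub>\<Lambda>(n) = \<Lambda> p\<^sub>\<Lambda>(n-1)\<close> turns
  them into the derivatives of \<open>laplace_I\<close>.\<close>

section \<open>Nakagami-\<open>m\<close> gains\<close>

lemma gain_dist_eq_erlang:
  assumes "m \<ge> 1"
  shows "gain_dist m = density lborel (erlang_density (m - 1) (real m))"
  unfolding gain_dist_def
proof (rule density_cong)
  show "(\<lambda>g. ennreal (nakagami_density m g)) \<in> borel_measurable lborel"
    unfolding nakagami_density_def by measurable
  show "(\<lambda>x. ennreal (erlang_density (m - 1) (real m) x)) \<in> borel_measurable lborel"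
    by measurable
  show "AE x in lborel. ennreal (nakagami_density m x) = ennreal (erlang_density (m - 1) (real m) x)"
    using AE_lborel_singleton[of 0]
  proof eventually_elim
    case (elim x)
    have "Gamma (real m) = fact (m - 1)"
      using assms Gamma_fact[of "m - 1"] by (simp add: of_nat_diff)
    moreover have "Suc (m - 1) = m" using assms by simp
    ultimately show ?case using elim
      by (auto simp: nakagami_density_def erlang_density_def)
  qed
qed

lemma prob_space_gain_dist: "m \<ge> 1 \<Longrightarrow> prob_space (gain_dist m)"
  using gain_dist_eq_erlang[of m] prob_space_erlang_density[of "real m" "m - 1"] by simp

lemma AE_gain_dist_pos: "AE g in gain_dist m. g > 0"
  unfolding gain_dist_def
  by (subst AE_density) (auto simp: nakagami_density_def split: if_splits)

lemma sets_gain_dist [measurable_cong]: "sets (gain_dist m) = sets borel"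
  unfolding gain_dist_def by simp

lemma integral_erlang_density:
  assumes "l > 0"
  shows "integral\<^sup>L lborel (erlang_density k l) = 1"
proof -
  have "(\<integral>\<^sup>+ x. ennreal (erlang_density k l x) \<partial>lborel) = ennreal 1"
    using nn_integral_erlang_ith_moment[OF assms, of k 0] by simp
  then show ?thesis
    using assms by (subst (asm) nn_integral_eq_integrable) auto
qed

lemma laplace_gain_dist:
  assumes m: "m \<ge> 1" and u: "u \<ge> 0"
  shows "integral\<^sup>L (gain_dist m) (\<lambda>g. exp (- u * g)) = inverse ((1 + u / real m) ^ m)"
proof -
  have mpos: "real m > 0" using m by simp
  have sm: "Suc (m - 1) = m" using m by simp
  have "integral\<^sup>L (gain_dist m) (\<lambda>g. exp (- u * g))
      = integral\<^sup>L lborel (\<lambda>g. erlang_density (m - 1) (real m) g *\<^sub>R exp (- u * g))"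
    unfolding gain_dist_eq_erlang[OF m] using mpos
    by (subst integral_density) auto
  also have "\<dots> = integral\<^sup>L lborel (\<lambda>g. (real m / (real m + u)) ^ m * erlang_density (m - 1) (real m + u) g)"
    using mpos u
    by (intro Bochner_Integration.integral_cong refl)
       (auto simp: erlang_density_def sm power_divide field_simps exp_add[symmetric] exp_minus)
  also have "\<dots> = (real m / (real m + u)) ^ m"
    using mpos u integral_erlang_density[of "real m + u" "m - 1"] by simp
  also have "\<dots> = inverse ((1 + u / real m) ^ m)"
    using mpos u by (simp add: power_inverse[symmetric] field_simps)
  finally show ?thesis .
qed

text \<open>The source of the finite sum over \<open>k < m\<close> in the success probability.\<close>

lemma gain_dist_tail:
  assumes m: "m \<ge> 1" and T: "T \<ge> 0"
  shows "measure (gain_dist m) {g. T \<le> g} = (\<Sum>k<m. (real m * T) ^ k * exp (- real m * T) / fact k)"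
proof -
  have mpos: "real m > 0" using m by simp
  interpret G: prob_space "gain_dist m" using prob_space_gain_dist[OF m] .
  let ?f = "erlang_density (m - 1) (real m)"
  have "emeasure (gain_dist m) {..<T} = (\<integral>\<^sup>+ x. ennreal (?f x) * indicator {..<T} x \<partial>lborel)"
    unfolding gain_dist_eq_erlang[OF m] by (subst emeasure_density) auto
  also have "\<dots> = (\<integral>\<^sup>+ x. ennreal (?f x) * indicator {..T} x \<partial>lborel)"
    using AE_lborel_singleton[of T]
    by (intro nn_integral_cong_AE) (auto elim!: eventually_mono simp: indicator_def)
  also have "\<dots> = erlang_CDF (m - 1) (real m) T"
    using nn_integral_erlang_density[OF mpos] by simp
  finally have "measure (gain_dist m) {..<T} = erlang_CDF (m - 1) (real m) T"
    using erlang_CDF_nonneg[OF mpos] by (simp add: measure_def)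
  moreover have "{g. T \<le> g} = space (gain_dist m) - {..<T}"
    by (auto simp: gain_dist_def)
  moreover have "{..m-1} = {..<m}" using m by auto
  ultimately show ?thesis
    using G.prob_compl[of "{..<T}"] T by (simp add: sets_gain_dist erlang_CDF_def)
qed

section \<open>The mark distribution\<close>

lemma emeasure_disk: "R \<ge> 0 \<Longrightarrow> emeasure lborel (cball (c::real\<times>real) R) = ennreal (pi * R\<^sup>2)"
  using emeasure_cball[of R c] by (simp add: unit_ball_vol_2 power2_eq_square)

lemma measure_disk: "R \<ge> 0 \<Longrightarrow> measure lborel (cball (c::real\<times>real) R) = pi * R\<^sup>2"
  using emeasure_disk[of R c] by (simp add: measure_def)

lemma prob_space_uniform_disk:
  "R > 0 \<Longrightarrow> prob_space (uniform_measure lborel (cball (c::real\<times>real) R))"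
  by (intro prob_space_uniform_measure) (simp_all add: emeasure_disk)

lemma prob_space_mark_dist: "R > 0 \<Longrightarrow> m \<ge> 1 \<Longrightarrow> prob_space (mark_dist c R m)"
  unfolding mark_dist_def by (intro prob_space_pair prob_space_uniform_disk prob_space_gain_dist)

lemma sets_mark_dist [measurable_cong]: "sets (mark_dist c R m) = sets (borel \<Otimes>\<^sub>M borel)"
  unfolding mark_dist_def by (intro sets_pair_measure_cong) (simp_all add: sets_gain_dist)

lemma AE_mark_dist:
  assumes "R > 0" "m \<ge> 1"
  shows "AE x in mark_dist c R m. snd x > 0 \<and> fst x \<in> cball c R"
proof -
  let ?U = "uniform_measure lborel (cball c R)"
  interpret U: prob_space ?U using prob_space_uniform_disk assms by blast
  interpret G: prob_space "gain_dist m" using prob_space_gain_dist assms by blast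
  interpret pair_prob_space ?U "gain_dist m" ..
  have [measurable]: "cball c R \<in> sets (borel :: (real\<times>real) measure)" by simp
  have "AE x in ?U. AE g in gain_dist m. snd (x,g) > 0 \<and> fst (x,g) \<in> cball c R"
    using AE_uniform_measureI[of "cball c R" lborel "\<lambda>x. x \<in> cball c R"]
    by (auto intro!: AE_gain_dist_pos)
  moreover have "{x \<in> space (?U \<Otimes>\<^sub>M gain_dist m). snd x > 0 \<and> fst x \<in> cball c R}
      \<in> sets (?U \<Otimes>\<^sub>M gain_dist m)"
    by measurable
  ultimately show ?thesis unfolding mark_dist_def
    by (intro AE_pair_measure) auto
qed

section \<open>The distance to the UAV from a uniform point of the disk\<close>

lemma uav_dist_pos: "h > 0 \<Longrightarrow> uav_dist c h x > 0"
  unfolding uav_dist_def by (simp add: add_nonneg_pos)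

lemma uav_dist_ge_height: "h > 0 \<Longrightarrow> uav_dist c h x \<ge> h"
  unfolding uav_dist_def
  by (metis abs_of_pos le_add_same_cancel2 real_sqrt_abs real_sqrt_le_mono zero_le_power2)

lemma uav_dist_le_iff:
  assumes "0 \<le> x"
  shows "uav_dist c h y \<le> x \<longleftrightarrow> (dist y c)\<^sup>2 + h\<^sup>2 \<le> x\<^sup>2"
proof -
  have "x = sqrt (x\<^sup>2)" using assms by simp
  then show ?thesis unfolding uav_dist_def by (subst (1) \<open>x = sqrt (x\<^sup>2)\<close>) (rule real_sqrt_le_iff)
qed

lemma uav_dist_measurable [measurable]: "uav_dist c h \<in> borel_measurable borel"
  unfolding uav_dist_def by measurable

lemma continuous_on_uav_dist: "continuous_on UNIV (uav_dist c h)"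
  unfolding uav_dist_def by (intro continuous_intros)

text \<open>The distance \<open>D\<close> from the UAV to a uniform point of the disk has density \<open>2r/R\<^sup>2\<close> on
  \<open>[h, d]\<close>; both laws are identified through their distribution functions.\<close>

definition radial_density :: "real \<Rightarrow> real \<Rightarrow> real \<Rightarrow> real \<Rightarrow> real" where
  "radial_density h d R r = indicator {h..d} r * (2*r/R\<^sup>2)"

definition radial_cdf :: "real \<Rightarrow> real \<Rightarrow> real \<Rightarrow> real \<Rightarrow> real" where
  "radial_cdf h d R x = (if x < h then 0 else if x \<le> d then (x\<^sup>2 - h\<^sup>2)/R\<^sup>2 else 1)"

lemma radial_density_measurable [measurable]: "radial_density h d R \<in> borel_measurable borel"
  unfolding radial_density_def by measurable

lemma nn_integral_radial_density:
  assumes "0 \<le> a" "a \<le> b" "R > 0"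
  shows "(\<integral>\<^sup>+ r. ennreal (indicator {a..b} r * (2*r/R\<^sup>2)) \<partial>lborel) = ennreal ((b\<^sup>2 - a\<^sup>2)/R\<^sup>2)"
proof -
  have cont: "continuous_on {a..b} (\<lambda>r. 2*r/R\<^sup>2)" using assms by (intro continuous_intros) auto
  have int: "integrable lborel (\<lambda>r. indicator {a..b} r *\<^sub>R (2*r/R\<^sup>2))"
    using borel_integrable_atLeastAtMost'[OF cont] by (simp add: set_integrable_def)
  have "integral\<^sup>L lborel (\<lambda>r. indicator {a..b} r *\<^sub>R (2*r/R\<^sup>2)) = b\<^sup>2/R\<^sup>2 - a\<^sup>2/R\<^sup>2"
    by (rule integral_FTC_atLeastAtMost[where F="\<lambda>r. r\<^sup>2/R\<^sup>2"])
       (use assms in \<open>auto intro!: derivative_eq_intros continuous_intros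
             simp: has_real_derivative_iff_has_vector_derivative[symmetric] field_simps power2_eq_square\<close>)
  then show ?thesis
    using int assms
    by (subst nn_integral_eq_integral) (auto simp: indicator_def diff_divide_distrib)
qed

context
  fixes c :: "real \<times> real" and R h d :: real
  assumes R: "R > 0" and h: "h > 0" and d: "d = sqrt (h\<^sup>2 + R\<^sup>2)"
begin

private lemma height_le_d: "h \<le> d"
  using R h d by (simp add: real_le_rsqrt)

private lemma d_squared: "d\<^sup>2 = h\<^sup>2 + R\<^sup>2"
  using d by simp

lemma uav_dist_le_d:
  assumes "y \<in> cball c R"
  shows "uav_dist c h y \<le> d"
proof -
  have "(dist y c)\<^sup>2 \<le> R\<^sup>2"
    using assms by (simp add: dist_commute power_mono)
  then show ?thesis
    using d_squared height_le_d h by (simp add: uav_dist_le_iff)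
qed

lemma disk_inter_uav_dist_atMost:
  assumes "h \<le> x" "x \<le> d"
  shows "cball c R \<inter> uav_dist c h -` {..x} = cball c (sqrt (x\<^sup>2 - h\<^sup>2))"
proof -
  have x: "0 \<le> x\<^sup>2 - h\<^sup>2" "x\<^sup>2 \<le> d\<^sup>2" "0 \<le> x"
    using assms h height_le_d by (auto intro!: power_mono)
  have "y \<in> cball c R \<inter> uav_dist c h -` {..x} \<longleftrightarrow> (dist y c)\<^sup>2 \<le> x\<^sup>2 - h\<^sup>2" for y
  proof
    assume "y \<in> cball c R \<inter> uav_dist c h -` {..x}"
    then show "(dist y c)\<^sup>2 \<le> x\<^sup>2 - h\<^sup>2"
      using uav_dist_le_iff[OF x(3)] by simp
  next
    assume y: "(dist y c)\<^sup>2 \<le> x\<^sup>2 - h\<^sup>2"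
    then have "(dist y c)\<^sup>2 \<le> R\<^sup>2" using x(2) d_squared by simp
    then have "dist c y \<le> R" using R by (simp add: power2_le_iff_abs_le dist_commute)
    then show "y \<in> cball c R \<inter> uav_dist c h -` {..x}"
      using y uav_dist_le_iff[OF x(3)] by simp
  qed
  moreover have "(dist y c)\<^sup>2 \<le> x\<^sup>2 - h\<^sup>2 \<longleftrightarrow> y \<in> cball c (sqrt (x\<^sup>2 - h\<^sup>2))" for y
  proof
    assume "(dist y c)\<^sup>2 \<le> x\<^sup>2 - h\<^sup>2"
    then show "y \<in> cball c (sqrt (x\<^sup>2 - h\<^sup>2))" by (simp add: dist_commute real_le_rsqrt)
  next
    assume "y \<in> cball c (sqrt (x\<^sup>2 - h\<^sup>2))"
    then have "dist y c \<le> sqrt (x\<^sup>2 - h\<^sup>2)" by (simp add: dist_commute)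
    then show "(dist y c)\<^sup>2 \<le> x\<^sup>2 - h\<^sup>2"
      using x(1) by (metis power_mono zero_le_dist real_sqrt_pow2)
  qed
  ultimately show ?thesis by blast
qed

lemma emeasure_radial_density_atMost:
  "emeasure (density lborel (\<lambda>r. ennreal (radial_density h d R r))) {..x} = ennreal (radial_cdf h d R x)"
proof (cases "x < h")
  case True
  then show ?thesis
    by (auto simp: emeasure_density radial_density_def radial_cdf_def indicator_def
        intro!: nn_integral_zero' AE_I2)
next
  case False
  have "emeasure (density lborel (\<lambda>r. ennreal (radial_density h d R r))) {..x}
      = (\<integral>\<^sup>+ r. ennreal (indicator {h..min x d} r * (2*r/R\<^sup>2)) \<partial>lborel)"
    by (simp add: emeasure_density) (auto intro!: nn_integral_cong simp: radial_density_def indicator_def)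
  also have "\<dots> = ennreal (((min x d)\<^sup>2 - h\<^sup>2)/R\<^sup>2)"
    using False R h height_le_d by (intro nn_integral_radial_density) auto
  finally show ?thesis using False d_squared R by (auto simp: min_def radial_cdf_def)
qed

lemma measure_uniform_disk_uav_dist_atMost:
  "measure (uniform_measure lborel (cball c R)) (uav_dist c h -` {..x}) = radial_cdf h d R x"
proof -
  have "measure (uniform_measure lborel (cball c R)) (uav_dist c h -` {..x})
      = measure lborel (cball c R \<inter> uav_dist c h -` {..x}) / (pi * R\<^sup>2)"
    using emeasure_disk[of R c] measure_disk[of R c] R
      measurable_sets_borel[OF uav_dist_measurable, of "{..x}" c h]
    by (subst measure_uniform_measure) auto
  also have "\<dots> = radial_cdf h d R x"
  proof -
    consider "x < h" | "h \<le> x" "x \<le> d" | "d < x" by linarith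
    then show ?thesis
    proof cases
      case 1
      then have "cball c R \<inter> uav_dist c h -` {..x} = {}"
        using uav_dist_ge_height[OF h, of c] by (auto simp: not_le) (meson not_le order.trans)
      then show ?thesis using 1 by (simp add: radial_cdf_def)
    next
      case 2
      then show ?thesis
        using R h disk_inter_uav_dist_atMost[OF 2]
        by (simp add: measure_disk radial_cdf_def power_mono)
    next
      case 3
      then have "cball c R \<inter> uav_dist c h -` {..x} = cball c R"
        using uav_dist_le_d by fastforce
      then show ?thesis using 3 R height_le_d by (simp add: measure_disk radial_cdf_def)
    qed
  qed
  finally show ?thesis .
qed

lemma distr_uniform_disk_uav_dist:
  "distr (uniform_measure lborel (cball c R)) lborel (uav_dist c h)
     = density lborel (\<lambda>r. ennreal (radial_density h d R r))"
proof (rule cdf_unique)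
  let ?U = "uniform_measure lborel (cball c R)"
  let ?D = "density lborel (\<lambda>r. ennreal (radial_density h d R r))"
  interpret U: prob_space ?U using prob_space_uniform_disk[OF R] .
  show "real_distribution (distr ?U lborel (uav_dist c h))"
    unfolding real_distribution_def real_distribution_axioms_def
    by (auto intro!: U.prob_space_distr)
  have "emeasure ?D UNIV = 1"
    using nn_integral_radial_density[of h d R] R h height_le_d d_squared
    by (simp add: emeasure_density radial_density_def mult.commute)
  then show "real_distribution ?D"
    unfolding real_distribution_def real_distribution_axioms_def
    by (auto intro!: prob_spaceI)
  have cdf_nonneg: "radial_cdf h d R x \<ge> 0" for x
  proof -
    have "h \<le> x \<Longrightarrow> h\<^sup>2 \<le> x\<^sup>2" using h by (simp add: power_mono)
    then show ?thesis by (simp add: radial_cdf_def)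
  qed
  show "cdf (distr ?U lborel (uav_dist c h)) = cdf ?D"
  proof
    fix x
    show "cdf (distr ?U lborel (uav_dist c h)) x = cdf ?D x"
      unfolding cdf_def2 measure_def emeasure_radial_density_atMost
      using measure_uniform_disk_uav_dist_atMost[of x, unfolded measure_def] cdf_nonneg[of x]
      by (subst measure_distr[unfolded measure_def]) auto
  qed
qed

lemma integral_uniform_disk_uav_dist:
  assumes cont: "continuous_on {h..d} F"
    and meas: "(\<lambda>y. F (uav_dist c h y)) \<in> borel_measurable borel"
  shows "integral\<^sup>L (uniform_measure lborel (cball c R)) (\<lambda>y. F (uav_dist c h y))
       = integral {h..d} (\<lambda>r. 2*r/R\<^sup>2 * F r)"
proof -
  let ?U = "uniform_measure lborel (cball c R)"
  interpret U: prob_space ?U using prob_space_uniform_disk[OF R] .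
  \<comment> \<open>a continuous, hence measurable, extension of \<open>F\<close> to the whole line\<close>
  define F' where "F' r = F (max h (min d r))" for r
  have "continuous_on UNIV F'"
    unfolding F'_def
    by (rule continuous_on_compose2[OF cont]) (auto intro!: continuous_intros simp: height_le_d)
  then have [measurable]: "F' \<in> borel_measurable borel"
    by (rule borel_measurable_continuous_onI)
  have [measurable]: "cball c R \<in> sets (borel :: (real\<times>real) measure)" by simp
  have "AE y in ?U. y \<in> cball c R" by (rule AE_uniform_measureI) auto
  then have "AE y in ?U. F (uav_dist c h y) = F' (uav_dist c h y)"
    by eventually_elim (simp add: F'_def uav_dist_le_d uav_dist_ge_height[OF h])
  then have "integral\<^sup>L ?U (\<lambda>y. F (uav_dist c h y)) = integral\<^sup>L ?U (\<lambda>y. F' (uav_dist c h y))"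
    using meas by (intro integral_cong_AE) auto
  also have "\<dots> = integral\<^sup>L (distr ?U lborel (uav_dist c h)) F'"
    by (subst integral_distr) auto
  also have "\<dots> = integral\<^sup>L lborel (\<lambda>r. radial_density h d R r *\<^sub>R F' r)"
    unfolding distr_uniform_disk_uav_dist using R h
    by (subst integral_density) (auto simp: radial_density_def indicator_def intro!: AE_I2)
  also have "\<dots> = integral\<^sup>L lborel (\<lambda>r. indicator {h..d} r *\<^sub>R (2*r/R\<^sup>2 * F r))"
    by (intro Bochner_Integration.integral_cong) (auto simp: radial_density_def F'_def indicator_def)
  also have "\<dots> = integral {h..d} (\<lambda>r. 2*r/R\<^sup>2 * F r)"
  proof -
    have c2: "continuous_on {h..d} (\<lambda>r. 2*r/R\<^sup>2 * F r)"
      using R by (intro continuous_intros cont) auto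
    show ?thesis
      using set_borel_integral_eq_integral(2)[OF borel_integrable_atLeastAtMost'[OF c2]]
      by (simp add: set_lebesgue_integral_def)
  qed
  finally show ?thesis .
qed

end

section \<open>Derivatives of Laplace transforms\<close>

lemma power_div_fact_le_exp:
  fixes x :: real assumes "x \<ge> 0" shows "x ^ n / fact n \<le> exp x"
proof -
  have "(\<Sum>i\<in>{n}. x ^ i / fact i) \<le> (\<Sum>i. x ^ i / fact i)"
    using assms summable_exp_generic[of x]
    by (intro sum_le_suminf) (auto simp: divide_inverse ac_simps)
  then show ?thesis by (simp add: exp_def divide_inverse ac_simps)
qed

lemma power_mult_exp_le:
  fixes z c :: real assumes "z \<ge> 0" "c > 0"
  shows "z ^ k * exp (- c * z) \<le> fact k / c ^ k"
proof -
  have "(c * z) ^ k / fact k \<le> exp (c * z)" using assms by (intro power_div_fact_le_exp) auto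
  then have "c ^ k * z ^ k \<le> fact k * exp (c * z)"
    by (simp add: power_mult_distrib divide_le_eq mult.commute)
  then show ?thesis using assms
    by (simp add: exp_minus field_simps)
qed

lemma abs_exp_minus_one_le: fixes a :: real shows "\<bar>exp a - 1\<bar> \<le> \<bar>a\<bar> * exp \<bar>a\<bar>"
proof (cases "a \<ge> 0")
  case True
  have "1 - a \<le> exp (- a)" using exp_ge_add_one_self[of "-a"] by simp
  then have "exp a * (1 - a) \<le> exp a * exp (-a)" by (intro mult_left_mono) auto
  then have "exp a - 1 \<le> a * exp a" by (simp add: exp_minus field_simps)
  then show ?thesis using True by auto
next
  case False
  have "1 + a \<le> exp a" by (rule exp_ge_add_one_self)
  moreover have "exp a \<le> 1" using False by simp
  moreover have "1 \<le> exp \<bar>a\<bar>" by simp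
  ultimately show ?thesis using False
    by (smt (verit, best) mult_le_cancel_left1)
qed

lemma exp_difference_quotient_le:
  fixes z t h :: real assumes "z \<ge> 0" "t > 0" "\<bar>h\<bar> < t / 2" "h \<noteq> 0"
  shows "\<bar>(exp (- (t + h) * z) - exp (- t * z)) / h\<bar> \<le> z * exp (- (t/2) * z)"
proof -
  have "exp (- (t + h) * z) - exp (- t * z) = exp (- t * z) * (exp (- h * z) - 1)"
    by (simp add: algebra_simps exp_add[symmetric])
  then have "\<bar>exp (- (t + h) * z) - exp (- t * z)\<bar> \<le> exp (- t * z) * (\<bar>h * z\<bar> * exp \<bar>h * z\<bar>)"
    using abs_exp_minus_one_le[of "- h * z"] by (simp add: abs_mult)
  also have "\<dots> = \<bar>h\<bar> * z * exp (- t * z + \<bar>h\<bar> * z)"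
    using assms by (simp add: abs_mult exp_add[symmetric] algebra_simps)
  also have "\<dots> \<le> \<bar>h\<bar> * z * exp (- (t/2) * z)"
  proof -
    have "\<bar>h\<bar> * z \<le> (t/2) * z" using assms by (intro mult_right_mono) auto
    then have "- t * z + \<bar>h\<bar> * z \<le> - (t/2) * z" by linarith
    then show ?thesis using assms by (intro mult_left_mono) auto
  qed
  finally show ?thesis using assms by (simp add: divide_le_eq abs_divide mult.commute mult.left_commute)
qed

text \<open>Moments \<open>E[Z\<^sup>k e\<^sup>-\<^sup>s\<^sup>Z]\<close> of a nonnegative random variable: the \<open>k\<close>-th derivative of the
  Laplace transform \<open>s \<mapsto> E[e\<^sup>-\<^sup>s\<^sup>Z]\<close> is \<open>(-1)\<^sup>k\<close> times the \<open>k\<close>-th of them.\<close>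

locale laplace_moments = prob_space +
  fixes Z :: "'a \<Rightarrow> real"
  assumes Z_measurable [measurable]: "Z \<in> borel_measurable M"
    and Z_nonneg: "AE x in M. Z x \<ge> 0"
begin

definition moment :: "nat \<Rightarrow> real \<Rightarrow> real" where
  "moment k s = (\<integral>x. Z x ^ k * exp (- s * Z x) \<partial>M)"

lemma AE_moment_integrand_le:
  assumes s: "s > 0"
  shows "AE x in M. \<bar>Z x ^ k * exp (- s * Z x)\<bar> \<le> fact k / s ^ k"
  using Z_nonneg
proof eventually_elim
  case (elim x)
  then show ?case using power_mult_exp_le[OF elim s, of k] by (simp add: abs_mult power_abs)
qed

lemma integrable_moment: "s > 0 \<Longrightarrow> integrable M (\<lambda>x. Z x ^ k * exp (- s * Z x))"
  using AE_moment_integrand_le by (intro integrable_const_bound) auto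

lemma abs_moment_le:
  assumes s: "s > 0"
  shows "\<bar>moment k s\<bar> \<le> fact k / s ^ k"
proof -
  have "\<bar>moment k s\<bar> \<le> (\<integral>x. \<bar>Z x ^ k * exp (- s * Z x)\<bar> \<partial>M)"
    unfolding moment_def using integral_norm_bound[of M "\<lambda>x. Z x ^ k * exp (- s * Z x)"] by simp
  also have "\<dots> \<le> (\<integral>x. fact k / s ^ k \<partial>M)"
    using integrable_moment[OF s, of k] AE_moment_integrand_le[OF s, of k]
    by (intro integral_mono_AE) auto
  finally show ?thesis by (simp add: prob_space)
qed

text \<open>Differentiation under the integral sign, by dominated convergence along sequences: for
  \<open>|h| < t/2\<close> the difference quotients are dominated by \<open>Z\<^sup>k\<^sup>+\<^sup>1 e\<^sup>-\<^sup>t\<^sup>Z\<^sup>/\<^sup>2 \<le> (k+1)!/(t/2)\<^sup>k\<^sup>+\<^sup>1\<close>.\<close>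

lemma moment_difference_quotient_tendsto:
  assumes t: "t > 0" and X: "\<And>i. X i \<noteq> 0" "\<And>i. \<bar>X i\<bar> < t/2" and X0: "X \<longlonglongrightarrow> 0"
  shows "(\<lambda>i. (moment k (t + X i) - moment k t) / X i) \<longlonglongrightarrow> - moment (Suc k) t"
proof -
  let ?s = "\<lambda>i x. Z x ^ k * ((exp (- (t + X i) * Z x) - exp (- t * Z x)) / X i)"
  have quotient_eq: "(moment k (t + X i) - moment k t) / X i = integral\<^sup>L M (?s i)" for i
  proof -
    have "t + X i > 0" using X(2)[of i] t by linarith
    then have "(moment k (t + X i) - moment k t) / X i
        = (\<integral>x. Z x ^ k * exp (- (t + X i) * Z x) - Z x ^ k * exp (- t * Z x) \<partial>M) / X i"
      unfolding moment_def using t integrable_moment[of "t + X i" k] integrable_moment[of t k]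
      by (subst Bochner_Integration.integral_diff) auto
    then show ?thesis by (simp add: right_diff_distrib)
  qed
  have "(\<lambda>i. integral\<^sup>L M (?s i)) \<longlonglongrightarrow> (\<integral>x. - (Z x ^ Suc k * exp (- t * Z x)) \<partial>M)"
  proof (rule integral_dominated_convergence[where w="\<lambda>_. fact (Suc k) / (t/2) ^ Suc k"])
    show "AE x in M. (\<lambda>i. ?s i x) \<longlonglongrightarrow> - (Z x ^ Suc k * exp (- t * Z x))"
    proof (rule AE_I2)
      fix x
      have "((\<lambda>s. exp (- s * Z x)) has_real_derivative - Z x * exp (- t * Z x)) (at t)"
        by (auto intro!: derivative_eq_intros)
      then have "((\<lambda>h. (exp (- (t + h) * Z x) - exp (- t * Z x)) / h) \<longlongrightarrow> - Z x * exp (- t * Z x)) (at 0)"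
        unfolding DERIV_def by simp
      moreover have "filterlim X (at 0) sequentially"
        using X0 X(1) by (auto simp: filterlim_at)
      ultimately have "(\<lambda>i. (exp (- (t + X i) * Z x) - exp (- t * Z x)) / X i) \<longlonglongrightarrow> - Z x * exp (- t * Z x)"
        by (rule filterlim_compose)
      then have "(\<lambda>i. ?s i x) \<longlonglongrightarrow> Z x ^ k * (- Z x * exp (- t * Z x))"
        by (rule tendsto_mult_left)
      then show "(\<lambda>i. ?s i x) \<longlonglongrightarrow> - (Z x ^ Suc k * exp (- t * Z x))"
        by (simp add: algebra_simps)
    qed
    show "AE x in M. norm (?s i x) \<le> fact (Suc k) / (t/2) ^ Suc k" for i
      using Z_nonneg
    proof eventually_elim
      case (elim x)
      have "norm (?s i x) = Z x ^ k * \<bar>(exp (- (t + X i) * Z x) - exp (- t * Z x)) / X i\<bar>"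
        using elim by (simp add: abs_mult)
      also have "\<dots> \<le> Z x ^ k * (Z x * exp (- (t/2) * Z x))"
        using elim X t by (intro mult_left_mono exp_difference_quotient_le) auto
      also have "\<dots> = Z x ^ Suc k * exp (- (t/2) * Z x)" by simp
      also have "\<dots> \<le> fact (Suc k) / (t/2) ^ Suc k"
        using elim t by (intro power_mult_exp_le) auto
      finally show ?case .
    qed
  qed auto
  then have "(\<lambda>i. integral\<^sup>L M (?s i)) \<longlonglongrightarrow> - moment (Suc k) t"
    unfolding moment_def by simp
  then show ?thesis
    unfolding quotient_eq .
qed

lemma has_real_derivative_moment:
  assumes t: "t > 0"
  shows "(moment k has_real_derivative - moment (Suc k) t) (at t)"
proof -
  let ?S = "{-t/2<..<t/2}"
  have "((\<lambda>h. (moment k (t + h) - moment k t) / h) \<longlongrightarrow> - moment (Suc k) t) (at 0 within ?S)"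
  proof (subst tendsto_at_iff_sequentially, intro allI impI)
    fix X :: "nat \<Rightarrow> real" assume X: "\<forall>i. X i \<in> ?S - {0}" and X0: "X \<longlonglongrightarrow> 0"
    have "X i \<noteq> 0 \<and> \<bar>X i\<bar> < t/2" for i
    proof -
      have "- (t/2) < X i" "X i < t/2" "X i \<noteq> 0" using X by auto
      then show ?thesis by (simp add: abs_less_iff)
    qed
    then have "(\<lambda>i. (moment k (t + X i) - moment k t) / X i) \<longlonglongrightarrow> - moment (Suc k) t"
      by (intro moment_difference_quotient_tendsto[OF t _ _ X0]) auto
    then show "((\<lambda>h. (moment k (t + h) - moment k t) / h) \<circ> X) \<longlonglongrightarrow> - moment (Suc k) t"
      unfolding comp_def .
  qed
  moreover have "at (0::real) within ?S = at 0"
    using t by (intro at_within_open) auto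
  ultimately show ?thesis unfolding DERIV_def by simp
qed

end

lemma higher_deriv_eq_signed:
  fixes f :: "nat \<Rightarrow> real \<Rightarrow> real" and g :: "real \<Rightarrow> real"
  assumes D: "\<And>k s. s > 0 \<Longrightarrow> (f k has_real_derivative - f (Suc k) s) (at s)"
    and g: "\<And>s. s > 0 \<Longrightarrow> g s = f 0 s"
  shows "s > 0 \<Longrightarrow> (deriv ^^ k) g s = (-1) ^ k * f k s"
proof (induction k arbitrary: s)
  case 0
  then show ?case using g by simp
next
  case (Suc k)
  have "eventually (\<lambda>x. (deriv ^^ k) g x = (-1) ^ k * f k x) (nhds s)"
    using Suc.IH eventually_nhds_in_open[of "{0<..}" s] Suc.prems
    by (auto elim!: eventually_mono)
  moreover have "((\<lambda>x. (-1) ^ k * f k x) has_real_derivative (-1) ^ k * (- f (Suc k) s)) (at s)"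
    using D[OF Suc.prems, of k] by (rule DERIV_cmult)
  ultimately have "((deriv ^^ k) g has_real_derivative (-1) ^ k * (- f (Suc k) s)) (at s)"
    by (subst DERIV_cong_ev[OF refl _ refl])
  then show ?case by (simp add: DERIV_imp_deriv)
qed

text \<open>Termwise differentiation of \<open>\<Sum>n. p n * f n k s\<close>, justified by the Weierstrass M-test on
  \<open>{s/2<..}\<close> with the decreasing bounds \<open>B k\<close>.\<close>

lemma has_real_derivative_suminf_moments:
  fixes f :: "nat \<Rightarrow> nat \<Rightarrow> real \<Rightarrow> real" and p :: "nat \<Rightarrow> real" and B :: "nat \<Rightarrow> real \<Rightarrow> real"
  assumes D: "\<And>n k s. s > 0 \<Longrightarrow> (f n k has_real_derivative - f n (Suc k) s) (at s)"
    and bound: "\<And>n k s. s > 0 \<Longrightarrow> \<bar>f n k s\<bar> \<le> B k s"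
    and B_antimono: "\<And>k s t. 0 < t \<Longrightarrow> t \<le> s \<Longrightarrow> B k s \<le> B k t"
    and p: "summable (\<lambda>n. \<bar>p n\<bar>)"
    and s: "s > 0"
  shows "summable (\<lambda>n. p n * f n k s)"
    "((\<lambda>s. \<Sum>n. p n * f n k s) has_real_derivative - (\<Sum>n. p n * f n (Suc k) s)) (at s)"
proof -
  let ?S = "{s/2<..}"
  have sm: "summable (\<lambda>n. \<bar>p n\<bar> * B j (s/2))" for j
    using p by (rule summable_mult2)
  have f_le: "\<bar>f n j x\<bar> \<le> B j (s/2)" if "s/2 \<le> x" for n j x
  proof -
    have "x > 0" using that s by linarith
    then have "\<bar>f n j x\<bar> \<le> B j x" by (rule bound)
    moreover have "B j x \<le> B j (s/2)" using that s by (intro B_antimono) auto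
    ultimately show ?thesis by linarith
  qed
  have uc: "uniformly_convergent_on ?S (\<lambda>n x. \<Sum>i<n. p i * - f i (Suc k) x)"
  proof (rule Weierstrass_m_test'[OF _ sm[of "Suc k"]])
    fix n x assume "x \<in> ?S"
    then have "\<bar>f n (Suc k) x\<bar> \<le> B (Suc k) (s/2)" by (intro f_le) simp
    then have "\<bar>p n\<bar> * \<bar>f n (Suc k) x\<bar> \<le> \<bar>p n\<bar> * B (Suc k) (s/2)" by (rule mult_left_mono) simp
    then show "norm (p n * - f n (Suc k) x) \<le> \<bar>p n\<bar> * B (Suc k) (s/2)"
      by (simp add: abs_mult)
  qed
  have summable_at_s: "summable (\<lambda>n. p n * f n j s)" for j
  proof (rule summable_comparison_test[OF _ sm[of j]])
    have "norm (p n * f n j s) \<le> \<bar>p n\<bar> * B j (s/2)" for n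
      using mult_left_mono[OF f_le[of s n j] abs_ge_zero[of "p n"]] s by (simp add: abs_mult)
    then show "\<exists>N. \<forall>n\<ge>N. norm (p n * f n j s) \<le> \<bar>p n\<bar> * B j (s/2)"
      by blast
  qed
  then show "summable (\<lambda>n. p n * f n k s)" .
  have dd: "((\<lambda>x. p n * f n k x) has_real_derivative p n * - f n (Suc k) x) (at x within ?S)"
    if "x \<in> ?S" for n x
  proof -
    have "x > 0" using that s by auto
    then show ?thesis by (rule has_field_derivative_at_within[OF DERIV_cmult[OF D]])
  qed
  have "convex ?S" by simp
  moreover have "s \<in> ?S" "s \<in> interior ?S" using s by (auto simp: interior_open)
  ultimately have "((\<lambda>x. \<Sum>n. p n * f n k x) has_real_derivative (\<Sum>n. p n * - f n (Suc k) s)) (at s)"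
    by (intro has_field_derivative_series'(2)[OF _ dd uc _ summable_at_s[of k]])
  then show "((\<lambda>s. \<Sum>n. p n * f n k s) has_real_derivative - (\<Sum>n. p n * f n (Suc k) s)) (at s)"
    using suminf_minus[OF summable_at_s[of "Suc k"]] by simp
qed

section \<open>Poisson weights\<close>

definition poisson_weight :: "real \<Rightarrow> nat \<Rightarrow> real" where
  "poisson_weight \<Lambda> n = exp (- \<Lambda>) * \<Lambda> ^ n / fact n"

lemma poisson_weight_nonneg: "\<Lambda> \<ge> 0 \<Longrightarrow> poisson_weight \<Lambda> n \<ge> 0"
  unfolding poisson_weight_def by simp

lemma sums_poisson_weight: "poisson_weight \<Lambda> sums 1"
proof -
  have "(\<lambda>n. exp (- \<Lambda>) * (\<Lambda> ^ n /\<^sub>R fact n)) sums (exp (- \<Lambda>) * exp \<Lambda>)"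
    by (intro sums_mult exp_converges)
  moreover have "(\<lambda>n. exp (- \<Lambda>) * (\<Lambda> ^ n /\<^sub>R fact n)) = poisson_weight \<Lambda>"
    by (simp add: fun_eq_iff poisson_weight_def divide_inverse)
  ultimately show ?thesis by (simp add: exp_minus)
qed

lemma summable_abs_poisson_weight: "\<Lambda> \<ge> 0 \<Longrightarrow> summable (\<lambda>n. \<bar>poisson_weight \<Lambda> n\<bar>)"
  using sums_poisson_weight[of \<Lambda>] poisson_weight_nonneg[of \<Lambda>] by (simp add: sums_iff)

lemma summable_poisson_weight_mult_bounded:
  assumes "\<Lambda> \<ge> 0" "\<And>n. \<bar>a n\<bar> \<le> B"
  shows "summable (\<lambda>n. poisson_weight \<Lambda> n * a n)"
  by (rule summable_comparison_test[OF _ summable_mult2[OF summable_abs_poisson_weight[OF assms(1)], of B]])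
     (use assms in \<open>auto simp: abs_mult intro!: mult_left_mono\<close>)

lemma (in prob_space) integral_suminf_poisson_weight:
  fixes f :: "nat \<Rightarrow> 'a \<Rightarrow> real"
  assumes \<Lambda>: "\<Lambda> \<ge> 0" and f: "\<And>j. integrable M (f j)" and bound: "\<And>j x. \<bar>f j x\<bar> \<le> B"
  shows "(\<Sum>j. poisson_weight \<Lambda> j * (\<integral>x. f j x \<partial>M)) = (\<integral>x. (\<Sum>j. poisson_weight \<Lambda> j * f j x) \<partial>M)"
proof -
  have summable_abs: "summable (\<lambda>j. \<bar>poisson_weight \<Lambda> j\<bar> * B)"
    using summable_abs_poisson_weight[OF \<Lambda>] by (rule summable_mult2)
  have "(\<Sum>j. poisson_weight \<Lambda> j * (\<integral>x. f j x \<partial>M)) = (\<Sum>j. \<integral>x. poisson_weight \<Lambda> j * f j x \<partial>M)"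
    by simp
  also have "\<dots> = (\<integral>x. (\<Sum>j. poisson_weight \<Lambda> j * f j x) \<partial>M)"
  proof (rule integral_suminf[symmetric])
    show "integrable M (\<lambda>x. poisson_weight \<Lambda> j * f j x)" for j
      using f by simp
    show "AE x in M. summable (\<lambda>j. norm (poisson_weight \<Lambda> j * f j x))"
      using bound
      by (intro AE_I2 summable_comparison_test_ev[OF _ summable_abs] always_eventually)
         (simp add: abs_mult mult_left_mono)
    have "(\<integral>x. norm (poisson_weight \<Lambda> j * f j x) \<partial>M) \<le> \<bar>poisson_weight \<Lambda> j\<bar> * B" for j
    proof -
      have "(\<integral>x. norm (poisson_weight \<Lambda> j * f j x) \<partial>M) \<le> (\<integral>x. \<bar>poisson_weight \<Lambda> j\<bar> * B \<partial>M)"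
        using f[of j] by (intro integral_mono) (auto simp: abs_mult intro!: mult_left_mono bound)
      also have "\<dots> = \<bar>poisson_weight \<Lambda> j\<bar> * B" using prob_space by simp
      finally show ?thesis .
    qed
    then show "summable (\<lambda>j. \<integral>x. norm (poisson_weight \<Lambda> j * f j x) \<partial>M)"
      by (intro summable_comparison_test_ev[OF _ summable_abs] always_eventually) simp
  qed
  finally show ?thesis .
qed

text \<open>The size-biased Poisson law is the shifted one: \<open>n p\<^sub>\<Lambda>(n) = \<Lambda> p\<^sub>\<Lambda>(n-1)\<close>.\<close>

lemma poisson_weight_size_biased_sums:
  assumes "summable (\<lambda>j. poisson_weight \<Lambda> j * a j)"
  shows "(\<lambda>n. poisson_weight \<Lambda> n * (real n * a (n - 1))) sums (\<Lambda> * (\<Sum>j. poisson_weight \<Lambda> j * a j))"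
proof -
  have "(\<lambda>j. poisson_weight \<Lambda> (Suc j) * (real (Suc j) * a (Suc j - 1)))
      = (\<lambda>j. \<Lambda> * (poisson_weight \<Lambda> j * a j))"
  proof
    fix j
    have "(fact (Suc j)::real) = real (Suc j) * fact j" by (simp del: of_nat_Suc)
    moreover have "real (Suc j) \<noteq> 0" by (simp del: of_nat_Suc)
    ultimately show "poisson_weight \<Lambda> (Suc j) * (real (Suc j) * a (Suc j - 1))
        = \<Lambda> * (poisson_weight \<Lambda> j * a j)"
      unfolding poisson_weight_def by (simp add: field_simps del: of_nat_Suc)
  qed
  moreover have "(\<lambda>j. \<Lambda> * (poisson_weight \<Lambda> j * a j)) sums (\<Lambda> * (\<Sum>j. poisson_weight \<Lambda> j * a j))"
    using assms by (intro sums_mult summable_sums)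
  ultimately have "(\<lambda>j. poisson_weight \<Lambda> (Suc j) * (real (Suc j) * a (Suc j - 1)))
      sums (\<Lambda> * (\<Sum>j. poisson_weight \<Lambda> j * a j))"
    by (simp only:)
  then show ?thesis
    by (subst (asm) sums_Suc_iff) simp
qed

section \<open>Laplace transform of the interference\<close>

locale uav_cell =
  fixes c :: "real \<times> real" and R h \<eta> P \<sigma>2 d :: real and m :: nat
  assumes R_pos: "R > 0" and h_pos: "h > 0" and d_def: "d = sqrt (h\<^sup>2 + R\<^sup>2)"
    and P_pos: "P > 0" and noise_pos: "\<sigma>2 > 0" and m_pos: "m \<ge> 1"
begin

abbreviation mark :: "((real \<times> real) \<times> real) measure" where
  "mark \<equiv> mark_dist c R m"

abbreviation marks :: "nat set \<Rightarrow> (nat \<Rightarrow> (real \<times> real) \<times> real) measure" where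
  "marks J \<equiv> PiM J (\<lambda>_. mark)"

abbreviation disk :: "(real \<times> real) measure" where
  "disk \<equiv> uniform_measure lborel (cball c R)"

definition rx_power :: "(real \<times> real) \<times> real \<Rightarrow> real" where
  "rx_power x = snd x * uav_dist c h (fst x) powr (- \<eta>)"

definition interference :: "nat set \<Rightarrow> (nat \<Rightarrow> (real \<times> real) \<times> real) \<Rightarrow> real" where
  "interference J \<omega> = (\<Sum>j\<in>J. rx_power (\<omega> j)) + \<sigma>2 / P"

definition mark_laplace :: "real \<Rightarrow> real" where
  "mark_laplace s = (\<integral>x. exp (- s * rx_power x) \<partial>mark)"

definition cond_laplace :: "nat \<Rightarrow> real \<Rightarrow> real" where
  "cond_laplace n s = exp (- s * \<sigma>2 / P) * mark_laplace s ^ n"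

lemma height_le_d: "h \<le> d"
  using R_pos h_pos d_def by (simp add: real_le_rsqrt)

lemma prob_space_mark: "prob_space mark"
  using prob_space_mark_dist[OF R_pos m_pos] .

lemma prob_space_marks: "prob_space (marks J)"
  by (intro prob_space_PiM prob_space_mark)

lemma prob_space_disk: "prob_space disk"
  using prob_space_uniform_disk[OF R_pos] .

lemma config_dist_eq_marks: "config_dist c R m n = marks {..<n}"
  unfolding config_dist_def ..

lemma rx_power_measurable [measurable]: "rx_power \<in> borel_measurable mark"
  unfolding rx_power_def by measurable

lemma rx_power_nonneg: "snd x > 0 \<Longrightarrow> rx_power x \<ge> 0"
  unfolding rx_power_def by simp

lemma AE_marks:
  assumes "finite J"
  shows "AE \<omega> in marks J. \<forall>j\<in>J. snd (\<omega> j) > 0 \<and> fst (\<omega> j) \<in> cball c R"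
proof (rule AE_finite_allI[OF assms])
  fix j assume "j \<in> J"
  then show "AE \<omega> in marks J. snd (\<omega> j) > 0 \<and> fst (\<omega> j) \<in> cball c R"
    using AE_PiM_component[of J "\<lambda>_. mark" j "\<lambda>x. snd x > 0 \<and> fst x \<in> cball c R"]
      AE_mark_dist[OF R_pos m_pos] prob_space_mark by auto
qed

lemma interference_measurable [measurable]: "interference J \<in> borel_measurable (marks J)"
  unfolding interference_def
proof (intro borel_measurable_add borel_measurable_const borel_measurable_sum)
  fix j assume "j \<in> J"
  then show "(\<lambda>\<omega>. rx_power (\<omega> j)) \<in> borel_measurable (marks J)" by measurable
qed

lemma interference_pos:
  "\<forall>j\<in>J. snd (\<omega> j) > 0 \<Longrightarrow> interference J \<omega> > 0"
  unfolding interference_def using P_pos noise_pos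
  by (intro add_nonneg_pos sum_nonneg rx_power_nonneg) auto

lemma AE_interference_nonneg:
  "finite J \<Longrightarrow> AE \<omega> in marks J. interference J \<omega> \<ge> 0"
  using AE_marks by (rule eventually_mono) (auto intro: less_imp_le interference_pos)

lemma laplace_moments_interference: "finite J \<Longrightarrow> laplace_moments (marks J) (interference J)"
  unfolding laplace_moments_def laplace_moments_axioms_def
  using prob_space_marks AE_interference_nonneg by auto

lemma integrable_exp_rx_power:
  assumes "s \<ge> 0"
  shows "integrable mark (\<lambda>x. exp (- s * rx_power x))"
proof -
  interpret prob_space mark by (rule prob_space_mark)
  show ?thesis
  proof (rule integrable_const_bound[where B=1])
    show "AE x in mark. norm (exp (- s * rx_power x)) \<le> 1"
      using AE_mark_dist[OF R_pos m_pos] by eventually_elim (use assms rx_power_nonneg in auto)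
  qed simp
qed

text \<open>Given the configuration size the marks are i.i.d., so the Laplace transform factorises.\<close>

lemma integral_exp_interference:
  assumes J: "finite J" and s: "s \<ge> 0"
  shows "(\<integral>\<omega>. exp (- s * interference J \<omega>) \<partial>marks J) = cond_laplace (card J) s"
proof -
  interpret product_sigma_finite "\<lambda>_::nat. mark"
    unfolding product_sigma_finite_def
    using prob_space_imp_sigma_finite[OF prob_space_mark] by simp
  have "exp (- s * interference J \<omega>) = exp (- s * \<sigma>2 / P) * (\<Prod>j\<in>J. exp (- s * rx_power (\<omega> j)))" for \<omega>
  proof -
    have "- s * interference J \<omega> = - s * \<sigma>2 / P + (\<Sum>j\<in>J. - s * rx_power (\<omega> j))"
      unfolding interference_def by (simp add: sum_distrib_left ring_distribs)
    then show ?thesis by (simp only: exp_add exp_sum[OF J])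
  qed
  then have "(\<integral>\<omega>. exp (- s * interference J \<omega>) \<partial>marks J)
      = exp (- s * \<sigma>2 / P) * (\<integral>\<omega>. (\<Prod>j\<in>J. exp (- s * rx_power (\<omega> j))) \<partial>marks J)"
    by simp
  also have "(\<integral>\<omega>. (\<Prod>j\<in>J. exp (- s * rx_power (\<omega> j))) \<partial>marks J) = (\<Prod>j\<in>J. mark_laplace s)"
    unfolding mark_laplace_def
    by (rule product_integral_prod[OF J integrable_exp_rx_power[OF s]])
  finally show ?thesis by (simp add: cond_laplace_def)
qed

lemma continuous_on_gain_laplace:
  assumes s: "s \<ge> 0"
  shows "continuous_on {h..d} (\<lambda>r. inverse ((1 + s * r powr (- \<eta>) / real m) ^ m))"
proof -
  have "1 + s * r powr (- \<eta>) / real m > 0" for r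
    using s m_pos by (intro add_pos_nonneg) auto
  then show ?thesis
    using h_pos m_pos
    by (intro continuous_intros) (auto simp: less_imp_neq[symmetric] dest: order.strict_trans2)
qed

lemma mark_laplace_eq_integral:
  assumes s: "s \<ge> 0"
  shows "mark_laplace s = integral {h..d} (\<lambda>r. 2*r/R\<^sup>2 * inverse ((1 + s * r powr (- \<eta>) / real m) ^ m))"
proof -
  let ?G = "gain_dist m"
  interpret U: prob_space disk by (rule prob_space_disk)
  interpret G: prob_space ?G using prob_space_gain_dist[OF m_pos] .
  interpret UG: pair_prob_space disk ?G ..
  have int: "integrable (disk \<Otimes>\<^sub>M ?G) (\<lambda>x. exp (- s * rx_power x))"
    using integrable_exp_rx_power[OF s] unfolding mark_dist_def .
  have "mark_laplace s = (\<integral>y. (\<integral>g. exp (- s * rx_power (y, g)) \<partial>?G) \<partial>disk)"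
    unfolding mark_laplace_def mark_dist_def using UG.integral_fst'[OF int] by simp
  also have "\<dots> = (\<integral>y. inverse ((1 + s * uav_dist c h y powr (- \<eta>) / real m) ^ m) \<partial>disk)"
  proof (intro Bochner_Integration.integral_cong refl)
    fix y
    have "(\<integral>g. exp (- s * rx_power (y, g)) \<partial>?G) = (\<integral>g. exp (- (s * uav_dist c h y powr (- \<eta>)) * g) \<partial>?G)"
      by (simp add: rx_power_def algebra_simps)
    also have "\<dots> = inverse ((1 + s * uav_dist c h y powr (- \<eta>) / real m) ^ m)"
      using s by (subst laplace_gain_dist[OF m_pos]) auto
    finally show "(\<integral>g. exp (- s * rx_power (y, g)) \<partial>?G) = inverse ((1 + s * uav_dist c h y powr (- \<eta>) / real m) ^ m)" .
  qed
  also have "\<dots> = integral {h..d} (\<lambda>r. 2*r/R\<^sup>2 * inverse ((1 + s * r powr (- \<eta>) / real m) ^ m))"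
    by (rule integral_uniform_disk_uav_dist[OF R_pos h_pos d_def continuous_on_gain_laplace[OF s]])
       measurable
  finally show ?thesis .
qed

lemma integral_radius: "integral {h..d} (\<lambda>r. r) = R\<^sup>2 / 2"
proof -
  have "((\<lambda>r. r) has_integral (d\<^sup>2/2 - h\<^sup>2/2)) {h..d}"
    using height_le_d by (intro fundamental_theorem_of_calculus)
       (auto intro!: derivative_eq_intros simp: has_real_derivative_iff_has_vector_derivative[symmetric])
  then show ?thesis using d_def by (simp add: integral_unique field_simps)
qed

text \<open>Poisson averaging of \<open>exp(-s\<sigma>\<^sup>2/P) q(s)\<^sup>n\<close> gives \<open>exp(-s\<sigma>\<^sup>2/P) exp(-\<Lambda>(1 - q(s)))\<close>, and
  \<open>\<Lambda>(1 - q(s))\<close> is the integral in the exponent of \<open>laplace_I\<close> because \<open>\<integral>\<^sub>h\<^sup>d r dr = R\<^sup>2/2\<close>.\<close>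

lemma sums_poisson_cond_laplace:
  assumes s: "s \<ge> 0"
  shows "(\<lambda>n. poisson_weight (a * lam * pi * R\<^sup>2) n * cond_laplace n s) sums laplace_I a lam h d \<eta> m P \<sigma>2 s"
proof -
  define \<Lambda> where "\<Lambda> = a * lam * pi * R\<^sup>2"
  let ?g = "\<lambda>r. inverse ((1 + s * r powr (- \<eta>) / real m) ^ m)"
  define K where "K = integral {h..d} (\<lambda>r. ?g r * r)"
  have gi: "(\<lambda>r. ?g r * r) integrable_on {h..d}"
    by (intro integrable_continuous_interval continuous_intros continuous_on_gain_laplace[OF s])
  have ri: "(\<lambda>r. r) integrable_on {h..d}"
    by (intro integrable_continuous_interval continuous_intros)
  have q: "mark_laplace s = 2 / R\<^sup>2 * K"
  proof -
    have "mark_laplace s = integral {h..d} (\<lambda>r. (2 / R\<^sup>2) *\<^sub>R (?g r * r))"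
      unfolding mark_laplace_eq_integral[OF s] by (intro integral_cong) (simp add: field_simps)
    then show ?thesis unfolding integral_cmul K_def by simp
  qed
  have "integral {h..d} (\<lambda>r. (1 - ?g r) * r) = integral {h..d} (\<lambda>r. r - ?g r * r)"
    by (intro integral_cong) (simp add: algebra_simps)
  also have "\<dots> = R\<^sup>2/2 - K"
    unfolding K_def by (subst integral_diff[OF ri gi]) (simp add: integral_radius)
  finally have L: "integral {h..d} (\<lambda>r. (1 - ?g r) * r) = R\<^sup>2/2 - K" .
  have "- \<Lambda> + \<Lambda> * mark_laplace s = - 2 * pi * lam * a * integral {h..d} (\<lambda>r. (1 - ?g r) * r)"
    unfolding L q \<Lambda>_def using R_pos by (simp add: field_simps)
  then have "(exp (- s * \<sigma>2 / P) * exp (- \<Lambda>)) * exp (\<Lambda> * mark_laplace s) = laplace_I a lam h d \<eta> m P \<sigma>2 s"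
    unfolding laplace_I_def by (simp add: mult.assoc exp_add[symmetric])
  moreover have "(\<lambda>n. (exp (- s * \<sigma>2 / P) * exp (- \<Lambda>)) * ((\<Lambda> * mark_laplace s) ^ n /\<^sub>R fact n)) sums
      ((exp (- s * \<sigma>2 / P) * exp (- \<Lambda>)) * exp (\<Lambda> * mark_laplace s))"
    by (intro sums_mult exp_converges)
  moreover have "(exp (- s * \<sigma>2 / P) * exp (- \<Lambda>)) * ((\<Lambda> * mark_laplace s) ^ n /\<^sub>R fact n)
      = poisson_weight \<Lambda> n * cond_laplace n s" for n
    by (simp add: poisson_weight_def cond_laplace_def power_mult_distrib field_simps)
  ultimately show ?thesis unfolding \<Lambda>_def by simp
qed

lemma ppp_expect_exp_interference:
  assumes s: "s \<ge> 0"
  shows "ppp_expect a lam c R m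
        (\<lambda>n \<omega>. exp (- s * ((\<Sum>i<n. snd (\<omega> i) * uav_dist c h (fst (\<omega> i)) powr (- \<eta>)) + \<sigma>2 / P)))
      = laplace_I a lam h d \<eta> m P \<sigma>2 s"
proof -
  have "integral\<^sup>L (config_dist c R m n)
          (\<lambda>\<omega>. exp (- s * ((\<Sum>i<n. snd (\<omega> i) * uav_dist c h (fst (\<omega> i)) powr (- \<eta>)) + \<sigma>2 / P)))
        = cond_laplace n s" for n
    using integral_exp_interference[OF finite_lessThan s, of n]
    by (simp add: config_dist_eq_marks interference_def rx_power_def)
  then show ?thesis
    unfolding ppp_expect_def Let_def
    using sums_poisson_cond_laplace[OF s] by (simp add: poisson_weight_def sums_iff)
qed

definition interference_moment :: "nat set \<Rightarrow> nat \<Rightarrow> real \<Rightarrow> real" where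
  "interference_moment J k s = (\<integral>\<omega>. interference J \<omega> ^ k * exp (- s * interference J \<omega>) \<partial>marks J)"

lemma interference_moment_eq_moment:
  "finite J \<Longrightarrow> interference_moment J = laplace_moments.moment (marks J) (interference J)"
  by (simp add: fun_eq_iff interference_moment_def
      laplace_moments.moment_def[OF laplace_moments_interference])

lemma interference_moment_0:
  "finite J \<Longrightarrow> s \<ge> 0 \<Longrightarrow> interference_moment J 0 s = cond_laplace (card J) s"
  using integral_exp_interference[of J s] by (simp add: interference_moment_def)

lemma has_real_derivative_interference_moment:
  "finite J \<Longrightarrow> s > 0 \<Longrightarrow>
    (interference_moment J k has_real_derivative - interference_moment J (Suc k) s) (at s)"
  using laplace_moments.has_real_derivative_moment[OF laplace_moments_interference]
  by (simp add: interference_moment_eq_moment)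

lemma abs_interference_moment_le:
  "finite J \<Longrightarrow> s > 0 \<Longrightarrow> \<bar>interference_moment J k s\<bar> \<le> fact k / s ^ k"
  using laplace_moments.abs_moment_le[OF laplace_moments_interference]
  by (simp add: interference_moment_eq_moment)

lemma higher_deriv_cond_laplace:
  assumes "finite J" "s > 0"
  shows "(deriv ^^ k) (cond_laplace (card J)) s = (-1) ^ k * interference_moment J k s"
proof (rule higher_deriv_eq_signed[where f="interference_moment J"])
  show "\<And>k s. 0 < s \<Longrightarrow> (interference_moment J k has_real_derivative - interference_moment J (Suc k) s) (at s)"
    using assms(1) by (rule has_real_derivative_interference_moment)
  show "\<And>s. 0 < s \<Longrightarrow> cond_laplace (card J) s = interference_moment J 0 s"
    using assms(1) by (simp add: interference_moment_0)
qed (rule assms(2))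

text \<open>The moments are the derivatives of \<open>cond_laplace\<close>, so they depend only on \<open>card J\<close>.\<close>

lemma interference_moment_card_eq:
  assumes "finite J" "finite J'" "card J = card J'" "s > 0"
  shows "interference_moment J k s = interference_moment J' k s"
  using higher_deriv_cond_laplace[OF assms(1,4), of k] higher_deriv_cond_laplace[OF assms(2,4), of k] assms(3)
  by simp

lemma continuous_on_interference_moment:
  "finite J \<Longrightarrow> continuous_on {0<..} (interference_moment J k)"
  by (intro continuous_at_imp_continuous_on ballI DERIV_isCont[OF has_real_derivative_interference_moment])
     auto

definition mixed_moment :: "real \<Rightarrow> nat \<Rightarrow> real \<Rightarrow> real" where
  "mixed_moment \<Lambda> k s = (\<Sum>n. poisson_weight \<Lambda> n * interference_moment {..<n} k s)"

lemma
  assumes "\<Lambda> \<ge> 0" "s > 0"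
  shows summable_mixed_moment: "summable (\<lambda>n. poisson_weight \<Lambda> n * interference_moment {..<n} k s)"
    and has_real_derivative_mixed_moment:
      "(mixed_moment \<Lambda> k has_real_derivative - mixed_moment \<Lambda> (Suc k) s) (at s)"
proof -
  have "0 < t \<Longrightarrow> t \<le> s \<Longrightarrow> fact k / s ^ k \<le> (fact k / t ^ k :: real)" for k s t
    by (intro divide_left_mono power_mono mult_pos_pos) auto
  note series = has_real_derivative_suminf_moments[where f="\<lambda>n. interference_moment {..<n}"
      and B="\<lambda>k s. fact k / s ^ k", OF has_real_derivative_interference_moment abs_interference_moment_le
      this summable_abs_poisson_weight[OF assms(1)] assms(2)]
  show "summable (\<lambda>n. poisson_weight \<Lambda> n * interference_moment {..<n} k s)"
    using series(1) by simp
  show "(mixed_moment \<Lambda> k has_real_derivative - mixed_moment \<Lambda> (Suc k) s) (at s)"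
    using series(2) unfolding mixed_moment_def[abs_def] by simp
qed

lemma laplace_I_eq_mixed_moment:
  "s \<ge> 0 \<Longrightarrow> laplace_I a lam h d \<eta> m P \<sigma>2 s = mixed_moment (a * lam * pi * R\<^sup>2) 0 s"
  using sums_poisson_cond_laplace[of s a lam]
  by (simp add: mixed_moment_def interference_moment_0 sums_iff)

lemma higher_deriv_laplace_I:
  assumes "a * lam * pi * R\<^sup>2 \<ge> 0" "s > 0"
  shows "(deriv ^^ k) (laplace_I a lam h d \<eta> m P \<sigma>2) s = (-1) ^ k * mixed_moment (a * lam * pi * R\<^sup>2) k s"
  by (rule higher_deriv_eq_signed[OF has_real_derivative_mixed_moment[OF assms(1)]
        laplace_I_eq_mixed_moment assms(2)]) auto

lemma continuous_on_higher_deriv_laplace_I: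
  assumes L: "a * lam * pi * R\<^sup>2 \<ge> 0"
  shows "continuous_on {0<..} ((deriv ^^ k) (laplace_I a lam h d \<eta> m P \<sigma>2))"
proof -
  let ?L = "laplace_I a lam h d \<eta> m P \<sigma>2" and ?\<Lambda> = "a * lam * pi * R\<^sup>2"
  have "continuous_on {0<..} (\<lambda>s. (-1) ^ k * mixed_moment ?\<Lambda> k s)"
    by (intro continuous_at_imp_continuous_on ballI continuous_mult continuous_const
        DERIV_isCont[OF has_real_derivative_mixed_moment[OF L]]) auto
  then show ?thesis
    by (rule continuous_on_cong[THEN iffD1, rotated 2]) (simp_all add: higher_deriv_laplace_I[OF L])
qed

end

section \<open>Success probability\<close>

lemma measurable_pair_fun_upd:
  "(\<lambda>(x, X). X(i := x)) \<in> N \<Otimes>\<^sub>M PiM I (\<lambda>_. N) \<rightarrow>\<^sub>M PiM (insert i I) (\<lambda>_. N)"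
proof -
  have "(\<lambda>(x, X). X(i := x)) = (\<lambda>(X, x). X(i := x)) \<circ> (\<lambda>(x, X). (X, x))"
    by (auto simp: fun_eq_iff)
  then show ?thesis
    using measurable_comp[OF measurable_pair_swap' measurable_add_dim[of i I "\<lambda>_. N"]] by simp
qed

lemma integral_PiM_insert_fun_upd:
  fixes f :: "('i \<Rightarrow> 'a) \<Rightarrow> real"
  assumes N: "prob_space N" and f: "f \<in> borel_measurable (PiM (insert i I) (\<lambda>_. N))"
  shows "(\<integral>\<omega>. f \<omega> \<partial>PiM (insert i I) (\<lambda>_. N)) = (\<integral>z. f (case z of (x, X) \<Rightarrow> X(i := x)) \<partial>(N \<Otimes>\<^sub>M PiM I (\<lambda>_. N)))"
proof -
  have "(\<integral>\<omega>. f \<omega> \<partial>PiM (insert i I) (\<lambda>_. N))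
      = (\<integral>\<omega>. f \<omega> \<partial>distr (N \<Otimes>\<^sub>M PiM I (\<lambda>_. N)) (PiM (insert i I) (\<lambda>_. N)) (\<lambda>(x, X). X(i := x)))"
    using distr_pair_PiM_eq_PiM[of I "\<lambda>_. N" i] N by simp
  also have "\<dots> = (\<integral>z. f (case z of (x, X) \<Rightarrow> X(i := x)) \<partial>(N \<Otimes>\<^sub>M PiM I (\<lambda>_. N)))"
    by (rule integral_distr[OF measurable_pair_fun_upd f])
  finally show ?thesis .
qed

context uav_cell
begin

lemma sinr_measurable [measurable]:
  assumes i: "i < n"
  shows "(\<lambda>\<omega>. sinr c h \<eta> P \<sigma>2 n \<omega> i) \<in> borel_measurable (marks {..<n})"
proof -
  have component: "(\<lambda>\<omega>. \<omega> j) \<in> marks {..<n} \<rightarrow>\<^sub>M mark" if "j < n" for j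
    using that by (intro measurable_component_singleton) auto
  have power: "(\<lambda>x. P * snd x * uav_dist c h (fst x) powr - \<eta>) \<in> borel_measurable mark"
    by measurable
  show ?thesis unfolding sinr_def
    by (intro borel_measurable_divide borel_measurable_add borel_measurable_sum borel_measurable_const
        measurable_compose[OF component power]) (use i in auto)
qed

lemma sinr_fun_upd_ge_iff:
  assumes J: "J = {..<n} - {i}" and gains: "\<forall>j\<in>J. snd (X j) > 0"
  shows "\<beta> \<le> sinr c h \<eta> P \<sigma>2 n (X(i := x)) i \<longleftrightarrow>
    \<beta> * interference J X * uav_dist c h (fst x) powr \<eta> \<le> snd x"
proof -
  let ?D = "uav_dist c h (fst x)"
  have "(\<Sum>j\<in>{..<n} - {i}. P * snd ((X(i := x)) j) * uav_dist c h (fst ((X(i := x)) j)) powr - \<eta>) + \<sigma>2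
      = P * interference J X"
    unfolding interference_def J rx_power_def using P_pos
    by (simp add: sum_distrib_left distrib_left mult.assoc)
  then have "sinr c h \<eta> P \<sigma>2 n (X(i := x)) i = snd x * ?D powr - \<eta> / interference J X"
    unfolding sinr_def using P_pos by simp
  also have "\<dots> = snd x / (interference J X * ?D powr \<eta>)"
    using uav_dist_pos[OF h_pos] by (simp add: powr_minus divide_inverse)
  finally show ?thesis
    using interference_pos[OF gains] uav_dist_pos[OF h_pos, of c "fst x"]
    by (simp add: le_divide_eq mult.assoc)
qed

text \<open>With \<open>\<beta> \<ge> 1\<close> at most one node can reach the threshold: each successful node must
  receive more power than all the others together plus noise.\<close>

lemma sinr_ge_unique:
  assumes \<beta>: "\<beta> \<ge> 1" and gains: "\<forall>j<n. snd (\<omega> j) > 0"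
    and "i < n" "j < n" "\<beta> \<le> sinr c h \<eta> P \<sigma>2 n \<omega> i" "\<beta> \<le> sinr c h \<eta> P \<sigma>2 n \<omega> j"
  shows "i = j"
proof (rule ccontr)
  assume ij: "i \<noteq> j"
  define S where "S k = P * snd (\<omega> k) * uav_dist c h (fst (\<omega> k)) powr - \<eta>" for k
  have S_nonneg: "S k \<ge> 0" if "k < n" for k
    using gains that P_pos unfolding S_def by (auto intro!: mult_nonneg_nonneg)
  have dominates: "S b + \<sigma>2 \<le> S a"
    if "a < n" "b < n" "a \<noteq> b" "\<beta> \<le> sinr c h \<eta> P \<sigma>2 n \<omega> a" for a b
  proof -
    let ?den = "(\<Sum>k\<in>{..<n} - {a}. S k) + \<sigma>2"
    have "S b \<le> (\<Sum>k\<in>{..<n} - {a}. S k)"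
      using that S_nonneg by (intro member_le_sum) auto
    moreover have "1 \<le> S a / ?den"
      using that(4) \<beta> unfolding sinr_def S_def[symmetric] by linarith
    moreover have "?den > 0"
      using calculation(1) S_nonneg[OF that(2)] noise_pos by linarith
    ultimately show ?thesis by (simp add: le_divide_eq)
  qed
  have "S j + \<sigma>2 \<le> S i" using dominates assms(3-5) ij by blast
  moreover have "S i + \<sigma>2 \<le> S j" using dominates assms(3,4,6) ij by blast
  ultimately show False using noise_pos by linarith
qed

lemma real_card_eq_sum_if:
  fixes n :: nat
  shows "real (card {i. i < n \<and> Q i}) = (\<Sum>i<n. if Q i then 1 else 0)"
proof -
  have "{i. i < n \<and> Q i} = {i \<in> {..<n}. Q i}" by blast
  then show ?thesis
    using sum.inter_filter[OF finite_lessThan[of n], of "\<lambda>_. 1::real" Q] by simp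
qed

lemma card_sinr_success_eq_indicator:
  assumes \<beta>: "\<beta> \<ge> 1" and gains: "\<forall>j<n. snd (\<omega> j) > 0"
  shows "real (card {i. i < n \<and> \<beta> \<le> sinr c h \<eta> P \<sigma>2 n \<omega> i})
    = (if \<exists>i<n. \<beta> \<le> sinr c h \<eta> P \<sigma>2 n \<omega> i then 1 else 0)"
proof (cases "\<exists>i<n. \<beta> \<le> sinr c h \<eta> P \<sigma>2 n \<omega> i")
  case True
  then obtain i where "i < n" "\<beta> \<le> sinr c h \<eta> P \<sigma>2 n \<omega> i" by blast
  then have "{i. i < n \<and> \<beta> \<le> sinr c h \<eta> P \<sigma>2 n \<omega> i} = {i}"
    using sinr_ge_unique[OF \<beta> gains] by blast
  then show ?thesis using True by simp
next
  case False
  then have "{i. i < n \<and> \<beta> \<le> sinr c h \<eta> P \<sigma>2 n \<omega> i} = {}" by blast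
  then show ?thesis by (simp only: if_not_P[OF False] card.empty of_nat_0)
qed

lemma measure_sinr_success_eq_integral_count:
  assumes \<beta>: "\<beta> \<ge> 1"
  shows "measure (config_dist c R m n) {\<omega> \<in> space (config_dist c R m n). \<exists>i<n. \<beta> \<le> sinr c h \<eta> P \<sigma>2 n \<omega> i}
       = integral\<^sup>L (config_dist c R m n) (\<lambda>\<omega>. real (card {i. i < n \<and> \<beta> \<le> sinr c h \<eta> P \<sigma>2 n \<omega> i}))"
proof -
  let ?Q = "marks {..<n}"
  let ?A = "{\<omega> \<in> space ?Q. \<exists>i<n. \<beta> \<le> sinr c h \<eta> P \<sigma>2 n \<omega> i}"
  have [measurable]: "(\<lambda>\<omega>. sinr c h \<eta> P \<sigma>2 n \<omega> i) \<in> borel_measurable ?Q" if "i < n" for i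
    using that by (rule sinr_measurable)
  have "?A = (\<Union>i<n. {\<omega> \<in> space ?Q. \<beta> \<le> sinr c h \<eta> P \<sigma>2 n \<omega> i})" by blast
  also have "\<dots> \<in> sets ?Q" by measurable
  finally have A [measurable]: "?A \<in> sets ?Q" .
  have count_measurable: "(\<lambda>\<omega>. real (card {i. i < n \<and> \<beta> \<le> sinr c h \<eta> P \<sigma>2 n \<omega> i})) \<in> borel_measurable ?Q"
    unfolding real_card_eq_sum_if by (intro borel_measurable_sum) measurable
  have "AE \<omega> in ?Q. real (card {i. i < n \<and> \<beta> \<le> sinr c h \<eta> P \<sigma>2 n \<omega> i}) = indicator ?A \<omega>"
    using AE_marks[OF finite_lessThan[of n]] AE_space
  proof eventually_elim
    case (elim \<omega>)
    have gains: "\<forall>j<n. snd (\<omega> j) > 0" using elim(1) by blast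
    show ?case
      using elim(2) by (simp add: card_sinr_success_eq_indicator[OF \<beta> gains] indicator_def)
  qed
  then have "integral\<^sup>L ?Q (\<lambda>\<omega>. real (card {i. i < n \<and> \<beta> \<le> sinr c h \<eta> P \<sigma>2 n \<omega> i}))
      = integral\<^sup>L ?Q (indicator ?A)"
    using count_measurable by (intro integral_cong_AE) auto
  then show ?thesis
    by (simp add: config_dist_eq_marks Int_absorb2 sets.sets_into_space)
qed

definition tail_arg :: "real \<Rightarrow> real \<times> real \<Rightarrow> real" where
  "tail_arg \<beta> y = real m * \<beta> * uav_dist c h y powr \<eta>"

text \<open>\<open>P(G \<ge> \<beta> I D\<^sup>\<eta>)\<close> for a node at \<open>y\<close> facing the interference of the configuration \<open>X\<close> on \<open>J\<close>.\<close>

definition cond_success :: "nat set \<Rightarrow> real \<Rightarrow> real \<times> real \<Rightarrow> (nat \<Rightarrow> (real \<times> real) \<times> real) \<Rightarrow> real" where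
  "cond_success J \<beta> y X =
     (\<Sum>k<m. tail_arg \<beta> y ^ k / fact k * (interference J X ^ k * exp (- tail_arg \<beta> y * interference J X)))"

lemma tail_arg_pos: "\<beta> > 0 \<Longrightarrow> tail_arg \<beta> y > 0"
  unfolding tail_arg_def using m_pos uav_dist_pos[OF h_pos, of c y] by simp

lemma tail_arg_measurable [measurable]: "tail_arg \<beta> \<in> borel_measurable borel"
  unfolding tail_arg_def by measurable

lemma continuous_on_tail_arg: "continuous_on UNIV (tail_arg \<beta>)"
proof -
  have "\<forall>x\<in>UNIV. uav_dist c h x \<noteq> 0" using uav_dist_pos[OF h_pos] by (simp add: less_imp_neq[symmetric])
  then show ?thesis unfolding tail_arg_def
    using continuous_on_uav_dist by (intro continuous_intros) auto
qed

lemma cond_success_measurable [measurable]: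
  "(\<lambda>(y, X). cond_success J \<beta> y X) \<in> borel_measurable (disk \<Otimes>\<^sub>M marks J)"
  unfolding cond_success_def by measurable

lemma abs_cond_success_le:
  assumes "\<beta> > 0" "interference J X \<ge> 0"
  shows "\<bar>cond_success J \<beta> y X\<bar> \<le> real m"
proof -
  have "\<bar>tail_arg \<beta> y ^ k / fact k * (interference J X ^ k * exp (- tail_arg \<beta> y * interference J X))\<bar> \<le> 1"
    for k
  proof -
    let ?z = "tail_arg \<beta> y * interference J X"
    have z: "?z \<ge> 0" using tail_arg_pos[OF assms(1), of y] assms(2) by simp
    have "tail_arg \<beta> y ^ k / fact k * (interference J X ^ k * exp (- tail_arg \<beta> y * interference J X))
        = ?z ^ k * exp (- 1 * ?z) / fact k"
      by (simp add: power_mult_distrib)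
    moreover have "?z ^ k * exp (- 1 * ?z) / fact k \<le> 1"
      using power_mult_exp_le[OF z, of 1 k] by simp
    moreover have "?z ^ k * exp (- 1 * ?z) / fact k \<ge> 0" using z by simp
    ultimately show ?thesis by (simp only: abs_of_nonneg)
  qed
  then have "\<bar>cond_success J \<beta> y X\<bar> \<le> (\<Sum>k<m. 1)"
    unfolding cond_success_def by (intro order.trans[OF sum_abs sum_mono])
  then show ?thesis by simp
qed

lemma integral_mark_coverage:
  assumes \<beta>: "\<beta> > 0" and I: "interference J X \<ge> 0"
  shows "(\<integral>x. (if \<beta> * interference J X * uav_dist c h (fst x) powr \<eta> \<le> snd x then 1 else 0::real) \<partial>mark)
       = (\<integral>y. cond_success J \<beta> y X \<partial>disk)"
proof -
  let ?G = "gain_dist m"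
  let ?T = "\<lambda>y. \<beta> * interference J X * uav_dist c h y powr \<eta>"
  interpret U: prob_space disk by (rule prob_space_disk)
  interpret G: prob_space ?G using prob_space_gain_dist[OF m_pos] .
  interpret UG: pair_prob_space disk ?G ..
  have int: "integrable (disk \<Otimes>\<^sub>M ?G) (\<lambda>x. if ?T (fst x) \<le> snd x then 1 else 0::real)"
    by (rule UG.integrable_const_bound[where B=1]) auto
  have "(\<integral>x. (if ?T (fst x) \<le> snd x then 1 else 0::real) \<partial>mark)
      = (\<integral>y. (\<integral>g. (if ?T y \<le> g then 1 else 0::real) \<partial>?G) \<partial>disk)"
    unfolding mark_dist_def using UG.integral_fst'[OF int] by simp
  also have "\<dots> = (\<integral>y. cond_success J \<beta> y X \<partial>disk)"
  proof (intro Bochner_Integration.integral_cong refl)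
    fix y
    have T0: "?T y \<ge> 0" using \<beta> I by simp
    have "(\<integral>g. (if ?T y \<le> g then 1 else 0::real) \<partial>?G) = (\<integral>g. indicator {g. ?T y \<le> g} g \<partial>?G)"
      by (intro Bochner_Integration.integral_cong) (auto simp: indicator_def)
    also have "\<dots> = measure ?G {g. ?T y \<le> g}"
      by (simp add: gain_dist_def)
    also have "\<dots> = (\<Sum>k<m. (real m * ?T y) ^ k * exp (- real m * ?T y) / fact k)"
      by (rule gain_dist_tail[OF m_pos T0])
    also have "\<dots> = cond_success J \<beta> y X"
      unfolding cond_success_def tail_arg_def
      by (intro sum.cong refl) (simp add: power_mult_distrib field_simps)
    finally show "(\<integral>g. (if ?T y \<le> g then 1 else 0::real) \<partial>?G) = cond_success J \<beta> y X" .
  qed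
  finally show ?thesis .
qed

lemma integral_marks_cond_success:
  assumes \<beta>: "\<beta> > 0" and J: "finite J"
  shows "(\<integral>X. cond_success J \<beta> y X \<partial>marks J)
      = (\<Sum>k<m. tail_arg \<beta> y ^ k / fact k * interference_moment J k (tail_arg \<beta> y))"
proof -
  interpret laplace_moments "marks J" "interference J"
    by (rule laplace_moments_interference[OF J])
  have "(\<integral>X. cond_success J \<beta> y X \<partial>marks J) = (\<Sum>k<m. (\<integral>X. tail_arg \<beta> y ^ k / fact k *
      (interference J X ^ k * exp (- tail_arg \<beta> y * interference J X)) \<partial>marks J))"
    unfolding cond_success_def
    by (rule Bochner_Integration.integral_sum)
       (intro integrable_mult_right integrable_moment tail_arg_pos[OF \<beta>])
  then show ?thesis by (simp add: interference_moment_def)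
qed

lemma integrable_cond_success:
  assumes \<beta>: "\<beta> > 0" and J: "finite J"
  shows "integrable (disk \<Otimes>\<^sub>M marks J) (\<lambda>(y, X). cond_success J \<beta> y X)"
proof -
  interpret U: prob_space disk by (rule prob_space_disk)
  interpret Q: prob_space "marks J" by (rule prob_space_marks)
  interpret UQ: pair_prob_space disk "marks J" ..
  have "AE X in marks J. norm (cond_success J \<beta> y X) \<le> real m" for y
    using AE_interference_nonneg[OF J] by eventually_elim (simp add: abs_cond_success_le[OF \<beta>])
  then have "AE y in disk. AE X in marks J. norm (cond_success J \<beta> y X) \<le> real m"
    by simp
  moreover have "{z \<in> space (disk \<Otimes>\<^sub>M marks J). norm (case z of (y, X) \<Rightarrow> cond_success J \<beta> y X) \<le> real m}
      \<in> sets (disk \<Otimes>\<^sub>M marks J)"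
    by measurable
  ultimately have "AE z in disk \<Otimes>\<^sub>M marks J. norm (case z of (y, X) \<Rightarrow> cond_success J \<beta> y X) \<le> real m"
    by (intro UQ.AE_pair_measure) auto
  then show ?thesis
    by (intro UQ.integrable_const_bound[where B="real m"]) auto
qed

lemma integral_sinr_success_eq_coverage:
  assumes i: "i < n" and J_def: "J = {..<n} - {i}"
  shows "(\<integral>\<omega>. (if \<beta> \<le> sinr c h \<eta> P \<sigma>2 n \<omega> i then 1 else 0::real) \<partial>marks {..<n})
    = (\<integral>z. (if \<beta> * interference J (snd z) * uav_dist c h (fst (fst z)) powr \<eta> \<le> snd (fst z) then 1 else 0::real)
        \<partial>(mark \<Otimes>\<^sub>M marks J))"
proof -
  have J: "finite J" by (simp add: J_def)
  have ins: "insert i J = {..<n}" using i by (auto simp: J_def)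
  let ?f = "\<lambda>\<omega>. if \<beta> \<le> sinr c h \<eta> P \<sigma>2 n \<omega> i then 1 else 0::real"
  let ?F = "\<lambda>z. if \<beta> * interference J (snd z) * uav_dist c h (fst (fst z)) powr \<eta> \<le> snd (fst z) then 1 else 0::real"
  have [measurable]: "(\<lambda>\<omega>. sinr c h \<eta> P \<sigma>2 n \<omega> i) \<in> borel_measurable (marks {..<n})"
    by (rule sinr_measurable[OF i])
  have [measurable]: "?f \<in> borel_measurable (marks {..<n})" by measurable
  have [measurable]: "?F \<in> borel_measurable (mark \<Otimes>\<^sub>M marks J)" by measurable
  have [measurable]: "(\<lambda>(x, X). X(i := x)) \<in> mark \<Otimes>\<^sub>M marks J \<rightarrow>\<^sub>M marks {..<n}"
    using measurable_pair_fun_upd[of i mark J] ins by simp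
  interpret M: prob_space mark by (rule prob_space_mark)
  interpret Q: prob_space "marks J" by (rule prob_space_marks)
  interpret MQ: pair_prob_space mark "marks J" ..
  have "(\<integral>\<omega>. ?f \<omega> \<partial>marks {..<n}) = (\<integral>z. ?f (case z of (x, X) \<Rightarrow> X(i := x)) \<partial>(mark \<Otimes>\<^sub>M marks J))"
    using integral_PiM_insert_fun_upd[OF prob_space_mark, of ?f i J] ins by simp
  also have "\<dots> = (\<integral>z. ?F z \<partial>(mark \<Otimes>\<^sub>M marks J))"
  proof (rule integral_cong_AE)
    have sets: "{z \<in> space (mark \<Otimes>\<^sub>M marks J). ?f (case z of (x, X) \<Rightarrow> X(i := x)) = ?F z}
        \<in> sets (mark \<Otimes>\<^sub>M marks J)"
      by measurable
    have inner: "AE X in marks J. ?f (X(i := x)) = ?F (x, X)" for x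
      using AE_marks[OF J]
    proof eventually_elim
      case (elim X)
      then show ?case using sinr_fun_upd_ge_iff[OF J_def, of X \<beta> x] by simp
    qed
    have "AE x in mark. AE X in marks J. ?f (X(i := x)) = ?F (x, X)"
      by (rule AE_I2) (rule inner)
    then show "AE z in mark \<Otimes>\<^sub>M marks J. ?f (case z of (x, X) \<Rightarrow> X(i := x)) = ?F z"
      using MQ.AE_pair_measure[OF sets] by simp
    show "(\<lambda>z. ?f (case z of (x, X) \<Rightarrow> X(i := x))) \<in> borel_measurable (mark \<Otimes>\<^sub>M marks J)"
      by measurable
  qed measurable
  finally show ?thesis .
qed

text \<open>The typical-node computation: with node \<open>i\<close> split off, integrate its Erlang gain against
  the threshold, then exchange the integrals over its position and the other nodes.\<close>

lemma integral_sinr_success_indicator: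
  assumes i: "i < n" and \<beta>: "\<beta> > 0"
  shows "(\<integral>\<omega>. (if \<beta> \<le> sinr c h \<eta> P \<sigma>2 n \<omega> i then 1 else 0::real) \<partial>marks {..<n})
       = (\<integral>y. (\<Sum>k<m. tail_arg \<beta> y ^ k / fact k * interference_moment ({..<n} - {i}) k (tail_arg \<beta> y)) \<partial>disk)"
proof -
  define J where "J = {..<n} - {i}"
  have J: "finite J" by (simp add: J_def)
  let ?F = "\<lambda>z. if \<beta> * interference J (snd z) * uav_dist c h (fst (fst z)) powr \<eta> \<le> snd (fst z) then 1 else 0::real"
  have [measurable]: "?F \<in> borel_measurable (mark \<Otimes>\<^sub>M marks J)" by measurable
  interpret M: prob_space mark by (rule prob_space_mark)
  interpret U: prob_space disk by (rule prob_space_disk)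
  interpret Q: prob_space "marks J" by (rule prob_space_marks)
  interpret MQ: pair_prob_space mark "marks J" ..
  interpret UQ: pair_prob_space disk "marks J" ..
  have "(\<integral>\<omega>. (if \<beta> \<le> sinr c h \<eta> P \<sigma>2 n \<omega> i then 1 else 0::real) \<partial>marks {..<n}) = (\<integral>z. ?F z \<partial>(mark \<Otimes>\<^sub>M marks J))"
    by (rule integral_sinr_success_eq_coverage[OF i J_def])
  also have "\<dots> = (\<integral>X. (\<integral>x. ?F (x, X) \<partial>mark) \<partial>marks J)"
  proof -
    have "integrable (mark \<Otimes>\<^sub>M marks J) (case_prod (\<lambda>x X. ?F (x, X)))"
      by (rule MQ.integrable_const_bound[where B=1]) auto
    from MQ.integral_snd[OF this] show ?thesis by (simp add: split_beta')
  qed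
  also have "\<dots> = (\<integral>X. (\<integral>y. cond_success J \<beta> y X \<partial>disk) \<partial>marks J)"
  proof (rule integral_cong_AE)
    show "AE X in marks J. (\<integral>x. ?F (x, X) \<partial>mark) = (\<integral>y. cond_success J \<beta> y X \<partial>disk)"
      using AE_interference_nonneg[OF J]
    proof eventually_elim
      case (elim X)
      then show ?case using integral_mark_coverage[OF \<beta> elim] by simp
    qed
  qed measurable
  also have "\<dots> = (\<integral>y. (\<integral>X. cond_success J \<beta> y X \<partial>marks J) \<partial>disk)"
    using UQ.integral_fst[OF integrable_cond_success[OF \<beta> J]] UQ.integral_snd[OF integrable_cond_success[OF \<beta> J]]
    by simp
  also have "\<dots> = (\<integral>y. (\<Sum>k<m. tail_arg \<beta> y ^ k / fact k * interference_moment J k (tail_arg \<beta> y)) \<partial>disk)"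
    by (intro Bochner_Integration.integral_cong refl integral_marks_cond_success[OF \<beta> J])
  finally show ?thesis
    unfolding J_def .
qed

definition typical_success :: "real \<Rightarrow> nat \<Rightarrow> real \<times> real \<Rightarrow> real" where
  "typical_success \<beta> j y = (\<Sum>k<m. tail_arg \<beta> y ^ k / fact k * interference_moment {..<j} k (tail_arg \<beta> y))"

definition mean_success :: "real \<Rightarrow> nat \<Rightarrow> real" where
  "mean_success \<beta> j = (\<integral>y. typical_success \<beta> j y \<partial>disk)"

lemma typical_success_measurable:
  assumes \<beta>: "\<beta> > 0"
  shows "typical_success \<beta> j \<in> borel_measurable borel"
proof -
  have "tail_arg \<beta> ` UNIV \<subseteq> {0<..}" using tail_arg_pos[OF \<beta>] by auto
  then have moment: "continuous_on UNIV (\<lambda>y. interference_moment {..<j} k (tail_arg \<beta> y))" for k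
    by (rule continuous_on_compose2[OF continuous_on_interference_moment[OF finite_lessThan] continuous_on_tail_arg])
  have "continuous_on UNIV (typical_success \<beta> j)"
    unfolding typical_success_def by (intro continuous_intros continuous_on_tail_arg moment) (auto simp del: fact_Suc)
  then show ?thesis by (rule borel_measurable_continuous_onI)
qed

lemma abs_typical_success_le:
  assumes \<beta>: "\<beta> > 0"
  shows "\<bar>typical_success \<beta> j y\<bar> \<le> real m"
proof -
  let ?s = "tail_arg \<beta> y"
  have s: "?s > 0" by (rule tail_arg_pos[OF \<beta>])
  have "\<bar>?s ^ k / fact k * interference_moment {..<j} k ?s\<bar> \<le> 1" for k
  proof -
    have "\<bar>?s ^ k / fact k * interference_moment {..<j} k ?s\<bar> = ?s ^ k / fact k * \<bar>interference_moment {..<j} k ?s\<bar>"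
      using s by (simp add: abs_mult)
    also have "\<dots> \<le> ?s ^ k / fact k * (fact k / ?s ^ k)"
      using s by (intro mult_left_mono abs_interference_moment_le) auto
    finally show ?thesis using s by simp
  qed
  then have "\<bar>typical_success \<beta> j y\<bar> \<le> (\<Sum>k<m. 1)"
    unfolding typical_success_def by (intro order.trans[OF sum_abs sum_mono])
  then show ?thesis by simp
qed

lemma integrable_typical_success:
  assumes \<beta>: "\<beta> > 0"
  shows "integrable disk (typical_success \<beta> j)"
proof -
  interpret prob_space disk by (rule prob_space_disk)
  show ?thesis
  proof (rule integrable_const_bound[where B="real m"])
    show "AE y in disk. norm (typical_success \<beta> j y) \<le> real m"
      using abs_typical_success_le[OF \<beta>] by simp
    show "typical_success \<beta> j \<in> borel_measurable disk"
      using typical_success_measurable[OF \<beta>] by simp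
  qed
qed

lemma abs_mean_success_le:
  assumes \<beta>: "\<beta> > 0"
  shows "\<bar>mean_success \<beta> j\<bar> \<le> real m"
proof -
  interpret prob_space disk by (rule prob_space_disk)
  have "\<bar>mean_success \<beta> j\<bar> \<le> (\<integral>y. \<bar>typical_success \<beta> j y\<bar> \<partial>disk)"
    unfolding mean_success_def using integral_norm_bound[of disk "typical_success \<beta> j"] by simp
  also have "\<dots> \<le> (\<integral>y. real m \<partial>disk)"
    using integrable_typical_success[OF \<beta>] abs_typical_success_le[OF \<beta>] by (intro integral_mono) auto
  also have "\<dots> = real m" using prob_space by simp
  finally show ?thesis .
qed

lemma integral_count_success:
  assumes \<beta>: "\<beta> > 0"
  shows "integral\<^sup>L (config_dist c R m n) (\<lambda>\<omega>. real (card {i. i < n \<and> \<beta> \<le> sinr c h \<eta> P \<sigma>2 n \<omega> i}))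
       = real n * mean_success \<beta> (n - 1)"
proof -
  interpret prob_space "marks {..<n}" by (rule prob_space_marks)
  have integrable: "integrable (marks {..<n}) (\<lambda>\<omega>. if \<beta> \<le> sinr c h \<eta> P \<sigma>2 n \<omega> i then 1 else 0::real)"
    if "i < n" for i
  proof (rule integrable_const_bound[where B=1])
    have [measurable]: "(\<lambda>\<omega>. sinr c h \<eta> P \<sigma>2 n \<omega> i) \<in> borel_measurable (marks {..<n})"
      by (rule sinr_measurable[OF that])
    show "(\<lambda>\<omega>. if \<beta> \<le> sinr c h \<eta> P \<sigma>2 n \<omega> i then 1 else 0::real) \<in> borel_measurable (marks {..<n})"
      by measurable
  qed simp
  have each: "(\<integral>\<omega>. (if \<beta> \<le> sinr c h \<eta> P \<sigma>2 n \<omega> i then 1 else 0::real) \<partial>marks {..<n}) = mean_success \<beta> (n - 1)"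
    if i: "i < n" for i
  proof -
    have "interference_moment ({..<n} - {i}) k (tail_arg \<beta> y) = interference_moment {..<n - 1} k (tail_arg \<beta> y)"
      for k y
      using i tail_arg_pos[OF \<beta>] by (intro interference_moment_card_eq) auto
    then show ?thesis
      unfolding integral_sinr_success_indicator[OF i \<beta>] mean_success_def typical_success_def by simp
  qed
  have "integral\<^sup>L (marks {..<n}) (\<lambda>\<omega>. real (card {i. i < n \<and> \<beta> \<le> sinr c h \<eta> P \<sigma>2 n \<omega> i}))
      = (\<Sum>i<n. (\<integral>\<omega>. (if \<beta> \<le> sinr c h \<eta> P \<sigma>2 n \<omega> i then 1 else 0::real) \<partial>marks {..<n}))"
    unfolding real_card_eq_sum_if by (rule Bochner_Integration.integral_sum) (simp add: integrable)
  also have "\<dots> = real n * mean_success \<beta> (n - 1)"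
    by (simp add: each)
  finally show ?thesis unfolding config_dist_eq_marks .
qed

definition success_integrand :: "real \<Rightarrow> real \<Rightarrow> real \<Rightarrow> real \<Rightarrow> real" where
  "success_integrand a lam \<beta> r = (\<Sum>k<m. (- real m * \<beta> * r powr \<eta>) ^ k / fact k *
     (deriv ^^ k) (laplace_I a lam h d \<eta> m P \<sigma>2) (real m * \<beta> * r powr \<eta>))"

lemma continuous_on_success_integrand:
  assumes L: "a * lam * pi * R\<^sup>2 \<ge> 0" and \<beta>: "\<beta> > 0"
  shows "continuous_on {0<..} (success_integrand a lam \<beta>)"
proof -
  have "continuous_on {0<..} (\<lambda>r. real m * \<beta> * r powr \<eta>)"
    by (intro continuous_intros) auto
  moreover have "(\<lambda>r. real m * \<beta> * r powr \<eta>) ` {0<..} \<subseteq> {0<..}"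
    using m_pos \<beta> by auto
  ultimately have derivs: "continuous_on {0<..}
      (\<lambda>r. (deriv ^^ k) (laplace_I a lam h d \<eta> m P \<sigma>2) (real m * \<beta> * r powr \<eta>))" for k
    by (rule continuous_on_compose2[OF continuous_on_higher_deriv_laplace_I[OF L]])
  show ?thesis unfolding success_integrand_def
    by (intro continuous_intros derivs) auto
qed

text \<open>Averaging over the number of interferers turns the moments of the conditional
  interference into the mixed moments, i.e. into derivatives of \<open>laplace_I\<close>.\<close>

lemma suminf_poisson_typical_success:
  assumes L: "a * lam * pi * R\<^sup>2 \<ge> 0" and \<beta>: "\<beta> > 0"
  shows "(\<Sum>j. poisson_weight (a * lam * pi * R\<^sup>2) j * typical_success \<beta> j y)
      = success_integrand a lam \<beta> (uav_dist c h y)"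
proof -
  let ?\<Lambda> = "a * lam * pi * R\<^sup>2" and ?s = "tail_arg \<beta> y"
  have s: "?s > 0" by (rule tail_arg_pos[OF \<beta>])
  have "(\<Sum>j. poisson_weight ?\<Lambda> j * typical_success \<beta> j y)
      = (\<Sum>j. \<Sum>k<m. ?s ^ k / fact k * (poisson_weight ?\<Lambda> j * interference_moment {..<j} k ?s))"
    unfolding typical_success_def by (simp only: sum_distrib_left mult.left_commute)
  also have "\<dots> = (\<Sum>k<m. \<Sum>j. ?s ^ k / fact k * (poisson_weight ?\<Lambda> j * interference_moment {..<j} k ?s))"
    by (intro suminf_sum summable_mult summable_mixed_moment[OF L s])
  also have "\<dots> = (\<Sum>k<m. ?s ^ k / fact k * mixed_moment ?\<Lambda> k ?s)"
    unfolding mixed_moment_def by (intro sum.cong refl suminf_mult[OF summable_mixed_moment[OF L s]])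
  also have "\<dots> = success_integrand a lam \<beta> (uav_dist c h y)"
    unfolding success_integrand_def tail_arg_def[symmetric]
  proof (intro sum.cong refl)
    fix k
    have "(-1::real) ^ k * (-1) ^ k = 1" by (simp add: power_mult_distrib[symmetric])
    then have "mixed_moment ?\<Lambda> k ?s = (-1) ^ k * (deriv ^^ k) (laplace_I a lam h d \<eta> m P \<sigma>2) ?s"
      unfolding higher_deriv_laplace_I[OF L s] by (simp only: mult.assoc[symmetric] mult_1)
    moreover have "- real m * \<beta> * uav_dist c h y powr \<eta> = (-1) * ?s" by (simp add: tail_arg_def)
    ultimately show "?s ^ k / fact k * mixed_moment ?\<Lambda> k ?s =
        (- real m * \<beta> * uav_dist c h y powr \<eta>) ^ k / fact k * (deriv ^^ k) (laplace_I a lam h d \<eta> m P \<sigma>2) ?s"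
      by (simp only: power_mult_distrib mult_ac times_divide_eq_left times_divide_eq_right)
  qed
  finally show ?thesis .
qed

lemma suminf_poisson_mean_success:
  assumes L: "a * lam * pi * R\<^sup>2 \<ge> 0" and \<beta>: "\<beta> > 0"
  shows "(\<Sum>j. poisson_weight (a * lam * pi * R\<^sup>2) j * mean_success \<beta> j)
      = integral {h..d} (\<lambda>r. 2*r/R\<^sup>2 * success_integrand a lam \<beta> r)"
proof -
  have "(\<Sum>j. poisson_weight (a * lam * pi * R\<^sup>2) j * mean_success \<beta> j)
      = (\<integral>y. (\<Sum>j. poisson_weight (a * lam * pi * R\<^sup>2) j * typical_success \<beta> j y) \<partial>disk)"
    unfolding mean_success_def
    by (rule prob_space.integral_suminf_poisson_weight[OF prob_space_disk L
          integrable_typical_success[OF \<beta>] abs_typical_success_le[OF \<beta>]])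
  also have "\<dots> = (\<integral>y. success_integrand a lam \<beta> (uav_dist c h y) \<partial>disk)"
    by (intro Bochner_Integration.integral_cong refl suminf_poisson_typical_success[OF L \<beta>])
  also have "\<dots> = integral {h..d} (\<lambda>r. 2*r/R\<^sup>2 * success_integrand a lam \<beta> r)"
  proof (rule integral_uniform_disk_uav_dist[OF R_pos h_pos d_def])
    show "continuous_on {h..d} (success_integrand a lam \<beta>)"
      using h_pos by (intro continuous_on_subset[OF continuous_on_success_integrand[OF L \<beta>]]) auto
    have "uav_dist c h ` UNIV \<subseteq> {0<..}" by (simp add: image_subset_iff uav_dist_pos[OF h_pos])
    then have "continuous_on UNIV (\<lambda>y. success_integrand a lam \<beta> (uav_dist c h y))"
      by (rule continuous_on_compose2[OF continuous_on_success_integrand[OF L \<beta>] continuous_on_uav_dist])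
    then show "(\<lambda>y. success_integrand a lam \<beta> (uav_dist c h y)) \<in> borel_measurable borel"
      by (rule borel_measurable_continuous_onI)
  qed
  finally show ?thesis .
qed

lemma ppp_expect_count_success:
  assumes \<beta>: "\<beta> > 0" and "a > 0" "lam > 0"
  shows "ppp_expect a lam c R m (\<lambda>n \<omega>. real (card {i. i < n \<and> \<beta> \<le> sinr c h \<eta> P \<sigma>2 n \<omega> i}))
       = 2 * a * pi * lam * integral {h..d} (\<lambda>r. success_integrand a lam \<beta> r * r)"
proof -
  define \<Lambda> where "\<Lambda> = a * lam * pi * R\<^sup>2"
  have L: "\<Lambda> \<ge> 0" using assms unfolding \<Lambda>_def by simp
  have "(\<lambda>n. poisson_weight \<Lambda> n * (real n * mean_success \<beta> (n - 1)))
      sums (\<Lambda> * (\<Sum>j. poisson_weight \<Lambda> j * mean_success \<beta> j))"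
    using summable_poisson_weight_mult_bounded[OF L abs_mean_success_le[OF \<beta>]]
    by (rule poisson_weight_size_biased_sums)
  then have "ppp_expect a lam c R m (\<lambda>n \<omega>. real (card {i. i < n \<and> \<beta> \<le> sinr c h \<eta> P \<sigma>2 n \<omega> i}))
      = \<Lambda> * integral {h..d} (\<lambda>r. 2*r/R\<^sup>2 * success_integrand a lam \<beta> r)"
    unfolding ppp_expect_def Let_def integral_count_success[OF \<beta>] \<Lambda>_def
      suminf_poisson_mean_success[OF L[unfolded \<Lambda>_def] \<beta>, symmetric]
    by (simp add: poisson_weight_def sums_iff)
  also have "\<dots> = 2 * a * pi * lam * integral {h..d} (\<lambda>r. success_integrand a lam \<beta> r * r)"
  proof -
    have "integral {h..d} (\<lambda>r. 2*r/R\<^sup>2 * success_integrand a lam \<beta> r)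
        = integral {h..d} (\<lambda>r. (2/R\<^sup>2) *\<^sub>R (success_integrand a lam \<beta> r * r))"
      by (intro integral_cong) (simp add: field_simps)
    also have "\<dots> = (2/R\<^sup>2) * integral {h..d} (\<lambda>r. success_integrand a lam \<beta> r * r)"
      by simp
    finally show ?thesis unfolding \<Lambda>_def using R_pos by (simp add: field_simps)
  qed
  finally show ?thesis .
qed

end

theorem theorem1:
  fixes lam a h R d \<eta> P \<sigma>2 \<beta> :: real and m :: nat and c :: "real \<times> real"
  assumes "lam > 0" and "0 < a" and "a \<le> 1" and "h > 0" and "R > 0"
    and "d = sqrt (h\<^sup>2 + R\<^sup>2)" and "P > 0" and "\<sigma>2 > 0" and "\<eta> > 2"
    and "m \<ge> 1" and "\<beta> \<ge> 1"
  shows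
    "(\<forall>s\<ge>0. ppp_expect a lam c R m
        (\<lambda>n \<omega>. exp (- s * ((\<Sum>i<n. snd (\<omega> i) * uav_dist c h (fst (\<omega> i)) powr (- \<eta>)) + \<sigma>2 / P)))
      = laplace_I a lam h d \<eta> m P \<sigma>2 s)
     \<and> ppp_prob a lam c R m (\<lambda>n \<omega>. \<exists>i<n. sinr c h \<eta> P \<sigma>2 n \<omega> i \<ge> \<beta>)
       = ppp_expect a lam c R m (\<lambda>n \<omega>. real (card {i. i < n \<and> sinr c h \<eta> P \<sigma>2 n \<omega> i \<ge> \<beta>}))
     \<and> ppp_expect a lam c R m (\<lambda>n \<omega>. real (card {i. i < n \<and> sinr c h \<eta> P \<sigma>2 n \<omega> i \<ge> \<beta>}))
       = 2 * a * pi * lam *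
         integral {h..d} (\<lambda>r. (\<Sum>k<m. (- real m * \<beta> * r powr \<eta>) ^ k / fact k *
              (deriv ^^ k) (laplace_I a lam h d \<eta> m P \<sigma>2) (real m * \<beta> * r powr \<eta>)) * r)"
proof -
  interpret uav_cell c R h \<eta> P \<sigma>2 d m
    using assms by unfold_locales auto
  have "\<beta> > 0" using assms by simp
  have "ppp_prob a lam c R m (\<lambda>n \<omega>. \<exists>i<n. sinr c h \<eta> P \<sigma>2 n \<omega> i \<ge> \<beta>)
      = ppp_expect a lam c R m (\<lambda>n \<omega>. real (card {i. i < n \<and> sinr c h \<eta> P \<sigma>2 n \<omega> i \<ge> \<beta>}))"
    unfolding ppp_prob_def ppp_expect_def Let_def
    by (simp only: measure_sinr_success_eq_integral_count[OF \<open>\<beta> \<ge> 1\<close>])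
  moreover have "ppp_expect a lam c R m (\<lambda>n \<omega>. real (card {i. i < n \<and> sinr c h \<eta> P \<sigma>2 n \<omega> i \<ge> \<beta>}))
      = 2 * a * pi * lam * integral {h..d} (\<lambda>r. success_integrand a lam \<beta> r * r)"
    using ppp_expect_count_success[OF \<open>\<beta> > 0\<close> \<open>a > 0\<close> \<open>lam > 0\<close>] .
  ultimately show ?thesis
    using ppp_expect_exp_interference by (simp add: success_integrand_def)
qed

end
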